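(* Let $\Gamma\cup\{\varphi\}$ be a finite set of closed formulas over a basic predicate signature $\Theta$. If $\Gamma\models_{\mathbf{Tm}^*}\varphi$ then $\Gamma\models_{\mathcal T(\mathbf{Tm}^* )}\varphi$.
   Context: Syntax. A basic predicate signature $\Theta$ consists of a nonempty set of predicate symbols, each of arity $\geq1$, and a possibly empty set $C$ of constants (no function symbols, no equality). Terms are variables or constants; formulas: atomic $P\tau_1\ldots\tau_n$, and $\neg\varphi$, $\Box\varphi$, $\forall x\varphi$, $\varphi\to\psi$. $\exists x\varphi$ abbreviates $\neg\forall x\neg\varphi$. $\varphi[x/\tau]$ is substitution of free occurrences of $x$ by $\tau$. Variants $\varphi\sim\psi$: one is obtained from the other by adding/deleting void quantifiers or by renaming bound variables (keeping free variables in the same places). Semantics. Truth values $\{\mathsf T,\mathsf t,\mathsf f,\mathsf F\}$, designated $\{\mathsf T,\mathsf t\}$. $\tilde\neg$: $\mathsf T\mapsto\{\mathsf F\},\mathsf t\mapsto\{\mathsf f\},\mathsf f\mapsto\{\mathsf t\},\mathsf F\mapsto\{\mathsf T\}$. $a\tilde\to b$ (rows $a$, columns $b$ in order $\mathsf T,\mathsf t,\mathsf f,\mathsf F$): row $\mathsf T$: $\{\mathsf T\},\{\mathsf t\},\{\mathsf f\},\{\mathsf F\}$; row $\mathsf t$: $\{\mathsf T\},\{\mathsf T,\mathsf t\},\{\mathsf f\},\{\mathsf f\}$; row $\mathsf f$: $\{\mathsf T\},\{\mathsf T,\mathsf t\},\{\mathsf T,\mathsf t\},\{\mathsf t\}$;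 row $\mathsf F$: all $\{\mathsf T\}$. $\tilde\Box_1\mathsf T=\{\mathsf T,\mathsf t\}$, $\tilde\Box_1a=\{\mathsf f,\mathsf F\}$ for $a\ne\mathsf T$. $\tilde\forall^d_4(X)=\{\min X\}$ for nonempty $X$, order $\mathsf F<\mathsf f<\mathsf t<\mathsf T$. A structure $\mathfrak A=\langle U,\cdot^{\mathfrak A}\rangle$ over $\Theta$: $U\ne\emptyset$, $P^{\mathfrak A}:U^n\to\{\mathsf T,\mathsf t,\mathsf f,\mathsf F\}$, $c^{\mathfrak A}\in U$. $\Theta_U$ adds new constants $\bar a$ for $a\in U\setminus C^{\mathfrak A}$, interpreted by $a$ in $\mathfrak A_U$. A $\mathbf{Tm}^*$-valuation over $\mathfrak A$ is $v:Sen(\Theta_U)\to\{\mathsf T,\mathsf t,\mathsf f,\mathsf F\}$ with $v(Pc_1\ldots c_n)=P^{\mathfrak A}(c_1^{\mathfrak A_U},\ldots,c_n^{\mathfrak A_U})$, $v(\neg\varphi)\in\tilde\neg v(\varphi)$, $v(\Box\varphi)\in\tilde\Box_1v(\varphi)$, $v(\varphi\to\psi)\in v(\varphi)\tilde\to v(\psi)$, $v(\forall x\varphi)\in\tilde\forall^d_4(\{v(\varphi[x/c]):c\in C\cup\bar U\})$, and $v(\varphi)=v(\varphi')$ whenever $\varphi\sim\varphi'$. For formulas with free variables among $x_1,\dots,x_n$, $\Gamma\models_{\mathbf{Tm}^*}\varphi$ iff for every structure $\mathfrak A$ over $\Theta$ and every $\mathbf{Tm}^*$-valuation $v$ over it,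 if $v(\gamma[\vec x/\vec c])\in\{\mathsf T,\mathsf t\}$ for all $\gamma\in\Gamma$ and all $\vec c$ from $C\cup\bar U$, then $v(\varphi[\vec x/\vec c])\in\{\mathsf T,\mathsf t\}$ for all $\vec c$. Tableaux. Let $\bar C=\{c_1,c_2,\ldots\}$ be an infinite set of new constants, $\Theta(\bar C)$ the extended signature. A signed formula is $\mathsf L{:}\varphi$ with $\mathsf L\in\{\mathsf T,\mathsf t,\mathsf f,\mathsf F\}$, $\varphi$ closed over $\Theta(\bar C)$; $\varphi(c)$ means $\varphi[x/c]$. A tableau for a signed formula is a finite tree with that formula at the root, obtained by repeatedly applying a rule to a signed formula on a branch and extending that branch by the alternatives of the rule (separated by $\mid$; each alternative gives a new branch containing the listed signed formulas). Rules: $\mathsf T{:}\neg\varphi/\mathsf F{:}\varphi$; $\mathsf t{:}\neg\varphi/\mathsf f{:}\varphi$; $\mathsf f{:}\neg\varphi/\mathsf t{:}\varphi$; $\mathsf F{:}\neg\varphi/\mathsf T{:}\varphi$; $\mathsf T{:}\Box\varphi/\mathsf T{:}\varphi$; $\mathsf t{:}\Box\varphi/\mathsf T{:}\varphi$; $\mathsf f{:}\Box\varphi/\mathsf t{:}\varphi\mid\mathsf f{:}\varphi\mid\mathsf F{:}\varphi$; $\mathsf F{:}\Box\varphi/\mathsf t{:}\varphi\mid\mathsf f{:}\varphi\mid\mathsf F{:}\varphi$; $\mathsf T{:}(\varphi\to\psi)/\mathsf F{:}\varphi\mid\mathsf t{:}\varphi,\mathsf t{:}\psi\mid\mathsf f{:}\varphi,\mathsf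 t{:}\psi\mid\mathsf f{:}\varphi,\mathsf f{:}\psi\mid\mathsf T{:}\psi$; $\mathsf t{:}(\varphi\to\psi)/\mathsf T{:}\varphi,\mathsf t{:}\psi\mid\mathsf t{:}\varphi,\mathsf t{:}\psi\mid\mathsf f{:}\varphi,\mathsf t{:}\psi\mid\mathsf f{:}\varphi,\mathsf f{:}\psi$; $\mathsf f{:}(\varphi\to\psi)/\mathsf T{:}\varphi,\mathsf f{:}\psi\mid\mathsf t{:}\varphi,\mathsf f{:}\psi\mid\mathsf t{:}\varphi,\mathsf F{:}\psi$; $\mathsf F{:}(\varphi\to\psi)/\mathsf T{:}\varphi,\mathsf F{:}\psi$. Quantifier rules: $(\mathsf T\forall)$ $\mathsf T{:}\forall x\varphi/\mathsf T{:}\varphi(c)$, $c$ any constant, reusable with any constants; $(\mathsf F\forall)$ $\mathsf F{:}\forall x\varphi/\mathsf F{:}\varphi(c)$, $c$ a constant not yet on the branch, usable only once per branch; $(\mathsf t\forall)$ $\mathsf t{:}\forall x\varphi/\mathsf t{:}\varphi(c),\mathsf t{:}\varphi(c')\mid\mathsf t{:}\varphi(c),\mathsf T{:}\varphi(c')$, where $c$ is new on the branch and $c'\neq c$ arbitrary; it is reusable in the sense that afterwards each resulting branch may again be split into a branch with $\mathsf t{:}\varphi(c'')$ and a branch with $\mathsf T{:}\varphi(c''')$ for any $c'',c'''\neq c$; $(\mathsf f\forall)$ $\mathsf f{:}\forall x\varphi/\mathsf f{:}\varphi(c),\mathsf f{:}\varphi(c')\mid\mathsf f{:}\varphi(c),\mathsf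 T{:}\varphi(c')\mid\mathsf f{:}\varphi(c),\mathsf t{:}\varphi(c')$, $c$ new on the branch, $c'\neq c$; reusable in the sense that each resulting branch may be split again into three branches containing $\mathsf f{:}\varphi(c'')$, $\mathsf T{:}\varphi(c''')$, $\mathsf t{:}\varphi(c'''')$ respectively, for any constants different from $c$. A branch is closed if it contains $\mathsf L{:}\varphi$ and $\mathsf L'{:}\varphi'$ with $\varphi\sim\varphi'$ and $\mathsf L\ne\mathsf L'$; a tableau is closed if all its branches are closed. A closed formula $\varphi$ over $\Theta$ is provable, $\models_{\mathcal T(\mathbf{Tm}^* )}\varphi$, if for each $\mathsf L\in\{\mathsf F,\mathsf f\}$ there is a closed tableau starting from $\mathsf L{:}\varphi$. For $\Gamma=\{\gamma_1,\ldots,\gamma_n\}$, $\Gamma\models_{\mathcal T(\mathbf{Tm}^* )}\varphi$ means $\models_{\mathcal T(\mathbf{Tm}^* )}(\gamma_1\to(\gamma_2\to\cdots\to(\gamma_n\to\varphi)\cdots))$. *)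

theory Defs
  imports Main
begin

datatype 'k tm = Var nat | Cst 'k

datatype ('p, 'k) fm =
    Atom 'p "'k tm list"
  | Neg "('p, 'k) fm"
  | Box "('p, 'k) fm"
  | All nat "('p, 'k) fm"
  | Imp "('p, 'k) fm" "('p, 'k) fm"

primrec fv :: "('p, 'k) fm \<Rightarrow> nat set" where
  "fv (Atom p ts) = {x. Var x \<in> set ts}"
| "fv (Neg f) = fv f"
| "fv (Box f) = fv f"
| "fv (All x f) = fv f - {x}"
| "fv (Imp f g) = fv f \<union> fv g"

primrec const_set :: "('p, 'k) fm \<Rightarrow> 'k set" where
  "const_set (Atom p ts) = {k. Cst k \<in> set ts}"
| "const_set (Neg f) = const_set f"
| "const_set (Box f) = const_set f"
| "const_set (All x f) = const_set f"
| "const_set (Imp f g) = const_set f \<union> const_set g"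

primrec arity_ok :: "('p \<Rightarrow> nat) \<Rightarrow> ('p, 'k) fm \<Rightarrow> bool" where
  "arity_ok ar (Atom p ts) = (length ts = ar p)"
| "arity_ok ar (Neg f) = arity_ok ar f"
| "arity_ok ar (Box f) = arity_ok ar f"
| "arity_ok ar (All x f) = arity_ok ar f"
| "arity_ok ar (Imp f g) = (arity_ok ar f \<and> arity_ok ar g)"

definition wff :: "('p \<Rightarrow> nat) \<Rightarrow> 'k set \<Rightarrow> ('p, 'k) fm \<Rightarrow> bool" where
  "wff ar K f \<longleftrightarrow> arity_ok ar f \<and> const_set f \<subseteq> K"

definition sentence :: "('p \<Rightarrow> nat) \<Rightarrow> 'k set \<Rightarrow> ('p, 'k) fm \<Rightarrow> bool" where
  "sentence ar K f \<longleftrightarrow> wff ar K f \<and> fv f = {}"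

primrec inst :: "(nat \<Rightarrow> 'k tm) \<Rightarrow> ('p, 'k) fm \<Rightarrow> ('p, 'k) fm" where
  "inst s (Atom p ts) = Atom p (map (\<lambda>t. case t of Var x \<Rightarrow> s x | Cst k \<Rightarrow> Cst k) ts)"
| "inst s (Neg f) = Neg (inst s f)"
| "inst s (Box f) = Box (inst s f)"
| "inst s (All x f) = All x (inst (s(x := Var x)) f)"
| "inst s (Imp f g) = Imp (inst s f) (inst s g)"

definition subst :: "nat \<Rightarrow> 'k tm \<Rightarrow> ('p, 'k) fm \<Rightarrow> ('p, 'k) fm" where
  "subst x t f = inst (Var(x := t)) f"

text \<open>y is substitutable for x in f (no free occurrence of x lies in the scope of a
  quantifier binding y).\<close>
primrec free_for :: "nat \<Rightarrow> nat \<Rightarrow> ('p, 'k) fm \<Rightarrow> bool" where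
  "free_for y x (Atom p ts) = True"
| "free_for y x (Neg f) = free_for y x f"
| "free_for y x (Box f) = free_for y x f"
| "free_for y x (All z f) =
     (z = x \<or> ((z \<noteq> y \<or> x \<notin> fv f) \<and> free_for y x f))"
| "free_for y x (Imp f g) = (free_for y x f \<and> free_for y x g)"

inductive variant :: "('p, 'k) fm \<Rightarrow> ('p, 'k) fm \<Rightarrow> bool" where
  v_refl: "variant f f"
| v_sym: "variant f g \<Longrightarrow> variant g f"
| v_trans: "variant f g \<Longrightarrow> variant g h \<Longrightarrow> variant f h"
| v_Neg: "variant f g \<Longrightarrow> variant (Neg f) (Neg g)"
| v_Box: "variant f g \<Longrightarrow> variant (Box f) (Box g)"
| v_All: "variant f g \<Longrightarrow> variant (All x f) (All x g)"
| v_Imp: "variant f g \<Longrightarrow> variant f' g' \<Longrightarrow> variant (Imp f f') (Imp g g')"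
| v_void: "x \<notin> fv f \<Longrightarrow> variant (All x f) f"
| v_rename: "y \<notin> fv (All x f) \<Longrightarrow> free_for y x f \<Longrightarrow>
             variant (All x f) (All y (subst x (Var y) f))"

text \<open>TT = T, Tt = t, Ff = f, FF = F.\<close>
datatype tv = TT | Tt | Ff | FF

definition designated :: "tv set" where
  "designated = {TT, Tt}"

fun rank :: "tv \<Rightarrow> nat" where
  "rank FF = 0" | "rank Ff = 1" | "rank Tt = 2" | "rank TT = 3"

fun negT :: "tv \<Rightarrow> tv set" where
  "negT TT = {FF}" | "negT Tt = {Ff}" | "negT Ff = {Tt}" | "negT FF = {TT}"

fun impT :: "tv \<Rightarrow> tv \<Rightarrow> tv set" where
  "impT TT b = {b}"
| "impT Tt TT = {TT}" | "impT Tt Tt = {TT, Tt}" | "impT Tt Ff = {Ff}" | "impT Tt FF = {Ff}"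
| "impT Ff TT = {TT}" | "impT Ff Tt = {TT, Tt}" | "impT Ff Ff = {TT, Tt}" | "impT Ff FF = {Tt}"
| "impT FF b = {TT}"

fun boxT :: "tv \<Rightarrow> tv set" where
  "boxT TT = {TT, Tt}" | "boxT a = {Ff, FF}"

definition forallT :: "tv set \<Rightarrow> tv set" where
  "forallT X = {a \<in> X. \<forall>b\<in>X. rank a \<le> rank b}"

text \<open>A structure over the signature (arities ar, constants C): universe U, interpretation
  PI of predicates (only arguments from U matter), interpretation CI of constants.\<close>
definition is_structure :: "'c set \<Rightarrow> 'u set \<Rightarrow> ('c \<Rightarrow> 'u) \<Rightarrow> bool" where
  "is_structure C U CI \<longleftrightarrow> U \<noteq> {} \<and> CI ` C \<subseteq> U"

text \<open>Constants of Theta_U: the constants of C (Inl) plus new names (Inr a) for a in U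
  not denoted by a constant of C.\<close>
definition constsU :: "'c set \<Rightarrow> 'u set \<Rightarrow> ('c \<Rightarrow> 'u) \<Rightarrow> ('c + 'u) set" where
  "constsU C U CI = Inl ` C \<union> Inr ` (U - CI ` C)"

fun interpU :: "('c \<Rightarrow> 'u) \<Rightarrow> 'c + 'u \<Rightarrow> 'u" where
  "interpU CI (Inl c) = CI c"
| "interpU CI (Inr a) = a"

fun eval_tm :: "('c \<Rightarrow> 'u) \<Rightarrow> ('c + 'u) tm \<Rightarrow> 'u" where
  "eval_tm CI (Cst k) = interpU CI k"
| "eval_tm CI (Var x) = undefined"

definition is_valuation ::
  "('p \<Rightarrow> nat) \<Rightarrow> 'c set \<Rightarrow> 'u set \<Rightarrow> ('p \<Rightarrow> 'u list \<Rightarrow> tv) \<Rightarrow> ('c \<Rightarrow> 'u)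
   \<Rightarrow> (('p, 'c + 'u) fm \<Rightarrow> tv) \<Rightarrow> bool" where
  "is_valuation ar C U PI CI v \<longleftrightarrow>
    (let K = constsU C U CI; Sen = sentence ar K in
     (\<forall>p ts. Sen (Atom p ts) \<longrightarrow> v (Atom p ts) = PI p (map (eval_tm CI) ts)) \<and>
     (\<forall>f. Sen (Neg f) \<longrightarrow> v (Neg f) \<in> negT (v f)) \<and>
     (\<forall>f. Sen (Box f) \<longrightarrow> v (Box f) \<in> boxT (v f)) \<and>
     (\<forall>f g. Sen (Imp f g) \<longrightarrow> v (Imp f g) \<in> impT (v f) (v g)) \<and>
     (\<forall>x f. Sen (All x f) \<longrightarrow>
         v (All x f) \<in> forallT {v (subst x (Cst k) f) | k. k \<in> K}) \<and>
     (\<forall>f g. Sen f \<and> Sen g \<and> variant f g \<longrightarrow> v f = v g))"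

definition sem_conseq_in ::
  "('p \<Rightarrow> nat) \<Rightarrow> 'c set \<Rightarrow> ('p, 'c) fm set \<Rightarrow> ('p, 'c) fm \<Rightarrow> 'u itself \<Rightarrow> bool" where
  "sem_conseq_in ar C \<Gamma> \<phi> _ \<longleftrightarrow>
    (\<forall>(U :: 'u set) PI CI v.
       is_structure C U CI \<and> is_valuation ar C U PI CI v \<longrightarrow>
       (\<forall>\<gamma>\<in>\<Gamma>. \<forall>s. (\<forall>x. s x \<in> constsU C U CI) \<longrightarrow>
            v (inst (Cst \<circ> s) (map_fm id Inl \<gamma>)) \<in> designated) \<longrightarrow>
       (\<forall>s. (\<forall>x. s x \<in> constsU C U CI) \<longrightarrow>
            v (inst (Cst \<circ> s) (map_fm id Inl \<phi>)) \<in> designated))"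

definition tm_conseq :: "('p \<Rightarrow> nat) \<Rightarrow> 'c set \<Rightarrow> ('p, 'c) fm set \<Rightarrow> ('p, 'c) fm \<Rightarrow> bool" where
  "tm_conseq ar C \<Gamma> \<phi> \<longleftrightarrow> sem_conseq_in ar C \<Gamma> \<phi> TYPE('c + nat)"

text \<open>Formulas over Theta(C-bar): constants Inl c (c in C) and the new constants Inr n.\<close>
type_synonym ('p, 'c) sfm = "tv \<times> ('p, 'c + nat) fm"

fun tconst :: "'c set \<Rightarrow> 'c + nat \<Rightarrow> bool" where
  "tconst C (Inl c) = (c \<in> C)"
| "tconst C (Inr n) = True"

definition bconsts :: "('p, 'c) sfm set \<Rightarrow> ('c + nat) set" where
  "bconsts S = (\<Union>(L, f)\<in>S. const_set f)"

definition branch_closed :: "('p, 'c) sfm set \<Rightarrow> bool" where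
  "branch_closed S \<longleftrightarrow> (\<exists>L f L' g. (L, f) \<in> S \<and> (L', g) \<in> S \<and> variant f g \<and> L \<noteq> L')"

text \<open>Alternatives of the propositional / modal rules (empty list: no rule applies).\<close>
fun palts :: "tv \<Rightarrow> ('p, 'k) fm \<Rightarrow> (tv \<times> ('p, 'k) fm) set list" where
  "palts TT (Neg f) = [{(FF, f)}]"
| "palts Tt (Neg f) = [{(Ff, f)}]"
| "palts Ff (Neg f) = [{(Tt, f)}]"
| "palts FF (Neg f) = [{(TT, f)}]"
| "palts TT (Box f) = [{(TT, f)}]"
| "palts Tt (Box f) = [{(TT, f)}]"
| "palts Ff (Box f) = [{(Tt, f)}, {(Ff, f)}, {(FF, f)}]"
| "palts FF (Box f) = [{(Tt, f)}, {(Ff, f)}, {(FF, f)}]"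
| "palts TT (Imp f g) =
     [{(FF, f)}, {(Tt, f), (Tt, g)}, {(Ff, f), (Tt, g)}, {(Ff, f), (Ff, g)}, {(TT, g)}]"
| "palts Tt (Imp f g) =
     [{(TT, f), (Tt, g)}, {(Tt, f), (Tt, g)}, {(Ff, f), (Tt, g)}, {(Ff, f), (Ff, g)}]"
| "palts Ff (Imp f g) = [{(TT, f), (Ff, g)}, {(Tt, f), (Ff, g)}, {(Tt, f), (FF, g)}]"
| "palts FF (Imp f g) = [{(TT, f), (FF, g)}]"
| "palts L (Atom p ts) = []"
| "palts L (All x f) = []"

text \<open>\<open>closable C S W\<close>: there is a closed tableau extending the branch S.  W records, per
  branch, the new constant c used by the (already applied) F-forall, t-forall or
  f-forall rule for a given signed formula; this enforces that F-forall is used once per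
  branch and that the re-uses of t-forall / f-forall use constants different from c.\<close>
inductive closable :: "'c set \<Rightarrow> ('p, 'c) sfm set \<Rightarrow> (('p, 'c) sfm \<Rightarrow> ('c + nat) option) \<Rightarrow> bool"
  for C where
  cl_closed: "branch_closed S \<Longrightarrow> closable C S W"
| cl_prop: "(L, f) \<in> S \<Longrightarrow> palts L f \<noteq> [] \<Longrightarrow>
    (\<forall>A\<in>set (palts L f). closable C (S \<union> A) W) \<Longrightarrow> closable C S W"
| cl_TAll: "(TT, All x f) \<in> S \<Longrightarrow> tconst C c \<Longrightarrow>
    closable C (insert (TT, subst x (Cst c) f) S) W \<Longrightarrow> closable C S W"
| cl_FAll: "(FF, All x f) \<in> S \<Longrightarrow> W (FF, All x f) = None \<Longrightarrow>
    tconst C c \<Longrightarrow> c \<notin> bconsts S \<Longrightarrow>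
    closable C (insert (FF, subst x (Cst c) f) S) (W((FF, All x f) := Some c)) \<Longrightarrow>
    closable C S W"
| cl_tAll: "(Tt, All x f) \<in> S \<Longrightarrow> W (Tt, All x f) = None \<Longrightarrow>
    tconst C c \<Longrightarrow> c \<notin> bconsts S \<Longrightarrow> tconst C c' \<Longrightarrow> c' \<noteq> c \<Longrightarrow>
    closable C (S \<union> {(Tt, subst x (Cst c) f), (Tt, subst x (Cst c') f)})
      (W((Tt, All x f) := Some c)) \<Longrightarrow>
    closable C (S \<union> {(Tt, subst x (Cst c) f), (TT, subst x (Cst c') f)})
      (W((Tt, All x f) := Some c)) \<Longrightarrow>
    closable C S W"
| cl_tAll_re: "(Tt, All x f) \<in> S \<Longrightarrow> W (Tt, All x f) = Some c \<Longrightarrow>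
    tconst C c' \<Longrightarrow> c' \<noteq> c \<Longrightarrow>
    closable C (insert (Tt, subst x (Cst c') f) S) W \<Longrightarrow>
    closable C (insert (TT, subst x (Cst c') f) S) W \<Longrightarrow>
    closable C S W"
| cl_fAll: "(Ff, All x f) \<in> S \<Longrightarrow> W (Ff, All x f) = None \<Longrightarrow>
    tconst C c \<Longrightarrow> c \<notin> bconsts S \<Longrightarrow> tconst C c' \<Longrightarrow> c' \<noteq> c \<Longrightarrow>
    closable C (S \<union> {(Ff, subst x (Cst c) f), (Ff, subst x (Cst c') f)})
      (W((Ff, All x f) := Some c)) \<Longrightarrow>
    closable C (S \<union> {(Ff, subst x (Cst c) f), (TT, subst x (Cst c') f)})
      (W((Ff, All x f) := Some c)) \<Longrightarrow>
    closable C (S \<union> {(Ff, subst x (Cst c) f), (Tt, subst x (Cst c') f)})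
      (W((Ff, All x f) := Some c)) \<Longrightarrow>
    closable C S W"
| cl_fAll_re: "(Ff, All x f) \<in> S \<Longrightarrow> W (Ff, All x f) = Some c \<Longrightarrow>
    tconst C c' \<Longrightarrow> c' \<noteq> c \<Longrightarrow>
    closable C (insert (Ff, subst x (Cst c') f) S) W \<Longrightarrow>
    closable C (insert (TT, subst x (Cst c') f) S) W \<Longrightarrow>
    closable C (insert (Tt, subst x (Cst c') f) S) W \<Longrightarrow>
    closable C S W"

definition tab_provable :: "'c set \<Rightarrow> ('p, 'c) fm \<Rightarrow> bool" where
  "tab_provable C \<phi> \<longleftrightarrow>
    (\<forall>L\<in>{FF, Ff}. closable C {(L, map_fm id Inl \<phi>)} (\<lambda>_. None))"

definition tab_conseq :: "'c set \<Rightarrow> ('p, 'c) fm list \<Rightarrow> ('p, 'c) fm \<Rightarrow> bool" where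
  "tab_conseq C gs \<phi> \<longleftrightarrow> tab_provable C (foldr Imp gs \<phi>)"

end

theory Submission
  imports Defs "HOL-Library.Countable_Set"
begin

text \<open>Completeness via Hintikka sets.  Suppose the tableau for \<open>L:(\<gamma>\<^sub>1 \<rightarrow> \<dots> \<rightarrow> \<gamma>\<^sub>n \<rightarrow> \<phi>)\<close>,
  \<open>L \<in> {F, f}\<close>, cannot be closed.  Applying every rule to every signed formula with every
  constant, in a fair order and always keeping an alternative that cannot be closed, yields an
  open set \<open>H\<close> that is saturated under all rules, over the countable domain of the constants
  of the root together with all new constants.  Reading off the label of each formula in \<open>H\<close>,
  and making arbitrary legal choices for formulas outside \<open>H\<close>, defines a Tm*-valuation that
  respects variants and gives every member of \<open>H\<close> its label.  The root gets the
  non-designated value \<open>L\<close>, and the truth table of \<open>\<rightarrow>\<close> then forces all \<open>\<gamma>\<^sub>i\<close> to be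
  designated and \<open>\<phi>\<close> not.\<close>

section \<open>Substitution\<close>

definition subst_tm :: "(nat \<Rightarrow> 'k tm) \<Rightarrow> 'k tm \<Rightarrow> 'k tm" where
  "subst_tm s t = (case t of Var x \<Rightarrow> s x | Cst k \<Rightarrow> Cst k)"

lemma subst_tm_simps [simp]: "subst_tm s (Var x) = s x" "subst_tm s (Cst k) = Cst k"
  by (simp_all add: subst_tm_def)

lemma inst_Atom [simp]: "inst s (Atom p ts) = Atom p (map (subst_tm s) ts)"
  by (simp add: subst_tm_def)

declare inst.simps(1) [simp del]

definition ground_or_id :: "(nat \<Rightarrow> 'k tm) \<Rightarrow> bool" where
  "ground_or_id s \<longleftrightarrow> (\<forall>z. s z = Var z \<or> (\<exists>k. s z = Cst k))"

lemma ground_or_id_upd: "ground_or_id s \<Longrightarrow> ground_or_id (s(x := Var x))"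
  by (auto simp: ground_or_id_def)

lemma ground_or_id_simps [simp]:
  "ground_or_id Var" "ground_or_id (Var(x := Cst k))" "ground_or_id (Cst \<circ> e)"
  "ground_or_id ((Cst \<circ> e)(x := Var x))"
  by (auto simp: ground_or_id_def)

lemma inst_cong: "\<forall>z\<in>fv f. s z = s' z \<Longrightarrow> inst s f = inst s' f"
proof (induction f arbitrary: s s')
  case (Atom p ts)
  have "subst_tm s t = subst_tm s' t" if "t \<in> set ts" for t
    using Atom.prems that by (cases t) auto
  then show ?case by simp
next
  case (All x f)
  have "inst (s(x := Var x)) f = inst (s'(x := Var x)) f" using All.prems by (intro All.IH) auto
  then show ?case by simp
qed auto

lemma subst_tm_Var [simp]: "subst_tm Var t = t"
  by (cases t) auto

lemma inst_Var: "inst Var f = f"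
  by (induction f) (auto simp: map_idI)

lemma inst_closed: "fv f = {} \<Longrightarrow> inst s f = f"
  using inst_cong[of f s Var] inst_Var by auto

fun vars_tm :: "'k tm \<Rightarrow> nat set" where
  "vars_tm (Var y) = {y}"
| "vars_tm (Cst k) = {}"

lemma fv_inst: "fv (inst s f) \<subseteq> (\<Union>z\<in>fv f. vars_tm (s z))"
proof (induction f arbitrary: s)
  case (Atom p ts)
  show ?case
  proof
    fix x assume "x \<in> fv (inst s (Atom p ts))"
    then obtain t where t: "t \<in> set ts" "subst_tm s t = Var x" by auto
    obtain z where "t = Var z" using t(2) by (cases t) auto
    with t show "x \<in> (\<Union>z\<in>fv (Atom p ts). vars_tm (s z))" by force
  qed
next
  case (All x f)
  show ?case
  proof
    fix y assume "y \<in> fv (inst s (All x f))"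
    then have y: "y \<in> fv (inst (s(x := Var x)) f)" "y \<noteq> x" by auto
    then obtain z where "z \<in> fv f" "y \<in> vars_tm ((s(x := Var x)) z)" using All.IH by blast
    with y show "y \<in> (\<Union>z\<in>fv (All x f). vars_tm (s z))" by (cases "z = x") auto
  qed
next
  case (Imp f g)
  then show ?case by (simp only: inst.simps fv.simps UN_Un) blast
qed simp_all

lemma fv_inst_ground_or_id: "ground_or_id s \<Longrightarrow> fv (inst s f) \<subseteq> fv f"
proof -
  assume "ground_or_id s"
  then have "vars_tm (s z) \<subseteq> {z}" for z
    unfolding ground_or_id_def by (metis empty_subsetI order_refl vars_tm.simps)
  then show ?thesis using fv_inst[of s f] by blast
qed

primrec capture_free :: "(nat \<Rightarrow> 'k tm) \<Rightarrow> ('p, 'k) fm \<Rightarrow> bool" where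
  "capture_free s (Atom p ts) = True"
| "capture_free s (Neg f) = capture_free s f"
| "capture_free s (Box f) = capture_free s f"
| "capture_free s (All x f) =
     ((\<forall>z\<in>fv f - {x}. s z \<noteq> Var x) \<and> capture_free (s(x := Var x)) f)"
| "capture_free s (Imp f g) = (capture_free s f \<and> capture_free s g)"

lemma capture_free_ground_or_id: "ground_or_id s \<Longrightarrow> capture_free s f"
proof (induction f arbitrary: s)
  case (All x f)
  have "s z \<noteq> Var x" if "z \<noteq> x" for z
    using All.prems that unfolding ground_or_id_def by (metis tm.distinct(1) tm.inject(1))
  then show ?case using All.IH ground_or_id_upd[OF All.prems] by auto
qed auto

lemma capture_free_rename: "free_for y x f \<Longrightarrow> capture_free (Var(x := Var y)) f"
proof (induction f)
  case (All w g)
  show ?case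
  proof (cases "w = x")
    case True
    then have id: "(Var(x := Var y))(w := Var w) = Var" by auto
    have "capture_free ((Var(x := Var y))(w := Var w)) g"
      unfolding id by (rule capture_free_ground_or_id) simp
    moreover have "\<forall>z\<in>fv g - {w}. (Var(x := Var y)) z \<noteq> Var w" using True by auto
    ultimately show ?thesis by (simp only: capture_free.simps)
  next
    case False
    then have g: "(w \<noteq> y \<or> x \<notin> fv g) \<and> free_for y x g" using All.prems by auto
    have id: "(Var(x := Var y))(w := Var w) = Var(x := Var y)" using False by auto
    have "\<forall>z\<in>fv g - {w}. (Var(x := Var y)) z \<noteq> Var w" using g False by auto
    moreover have "capture_free ((Var(x := Var y))(w := Var w)) g"
      unfolding id using All.IH g by blast
    ultimately show ?thesis by (simp only: capture_free.simps)
  qed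
qed auto

lemma inst_inst: "capture_free s f \<Longrightarrow> inst a (inst s f) = inst (\<lambda>z. subst_tm a (s z)) f"
proof (induction f arbitrary: s a)
  case (Atom p ts)
  have "subst_tm a (subst_tm s t) = subst_tm (\<lambda>z. subst_tm a (s z)) t" for t
    by (cases t) auto
  then show ?case by simp
next
  case (All x f)
  then have f: "capture_free (s(x := Var x)) f" and no_capture: "\<forall>z\<in>fv f - {x}. s z \<noteq> Var x"
    by auto
  have "inst (a(x := Var x)) (inst (s(x := Var x)) f) =
      inst (\<lambda>z. subst_tm (a(x := Var x)) ((s(x := Var x)) z)) f"
    using All.IH[OF f] .
  also have "\<dots> = inst ((\<lambda>z. subst_tm a (s z))(x := Var x)) f"
  proof (intro inst_cong ballI)
    fix z assume "z \<in> fv f"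
    then show "subst_tm (a(x := Var x)) ((s(x := Var x)) z) = ((\<lambda>z. subst_tm a (s z))(x := Var x)) z"
      using no_capture by (cases "z = x"; cases "s z") auto
  qed
  finally show ?case by simp
qed auto

lemma free_for_inst: "free_for y x f \<Longrightarrow> ground_or_id s \<Longrightarrow> free_for y x (inst s f)"
proof (induction f arbitrary: s)
  case (All z g)
  then show ?case
    using fv_inst_ground_or_id[OF ground_or_id_upd[OF All.prems(2)], of z g]
    by (auto simp: ground_or_id_upd)
qed auto

lemma inst_rename_commute:
  assumes s: "ground_or_id s" and y: "y \<notin> fv (All x f)" and "free_for y x f"
  shows "subst x (Var y) (inst (s(x := Var x)) f) = inst (s(y := Var y)) (subst x (Var y) f)"
proof -
  let ?sx = "s(x := Var x)" and ?sy = "s(y := Var y)" and ?r = "Var(x := Var y)"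
  have "subst x (Var y) (inst ?sx f) = inst (\<lambda>z. subst_tm ?r (?sx z)) f"
    unfolding subst_def by (rule inst_inst[OF capture_free_ground_or_id[OF ground_or_id_upd[OF s]]])
  also have "\<dots> = inst (\<lambda>z. subst_tm ?sy (?r z)) f"
  proof (intro inst_cong ballI)
    fix z assume "z \<in> fv f"
    then show "subst_tm ?r (?sx z) = subst_tm ?sy (?r z)"
    proof (cases "z = x")
      case False
      with \<open>z \<in> fv f\<close> y have "z \<noteq> y" by auto
      moreover have "s z = Var z \<or> (\<exists>k. s z = Cst k)" using s unfolding ground_or_id_def by blast
      ultimately show ?thesis using False by auto
    qed simp
  qed
  also have "\<dots> = inst ?sy (subst x (Var y) f)"
    unfolding subst_def by (rule inst_inst[OF capture_free_rename[OF assms(3)], symmetric])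
  finally show ?thesis .
qed

lemma variant_inst: "variant f g \<Longrightarrow> ground_or_id s \<Longrightarrow> variant (inst s f) (inst s g)"
proof (induction arbitrary: s rule: variant.induct)
  case (v_sym f g)
  then show ?case by (blast intro: variant.v_sym)
next
  case (v_trans f g h)
  then show ?case by (blast intro: variant.v_trans)
next
  case (v_All f g x)
  have "variant (inst (s(x := Var x)) f) (inst (s(x := Var x)) g)"
    using v_All.IH ground_or_id_upd[OF v_All.prems] by blast
  then show ?case by (simp add: variant.v_All)
next
  case (v_void x f)
  have "fv (inst (s(x := Var x)) f) \<subseteq> fv f"
    using fv_inst_ground_or_id ground_or_id_upd v_void.prems by blast
  then have "variant (All x (inst (s(x := Var x)) f)) (inst (s(x := Var x)) f)"
    using v_void.hyps by (intro variant.v_void) auto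
  moreover have "inst (s(x := Var x)) f = inst s f"
    using v_void.hyps by (intro inst_cong) auto
  ultimately show ?case by simp
next
  case (v_rename y x f)
  have sx: "ground_or_id (s(x := Var x))" using ground_or_id_upd v_rename.prems by blast
  have "variant (All x (inst (s(x := Var x)) f)) (All y (subst x (Var y) (inst (s(x := Var x)) f)))"
    using fv_inst_ground_or_id[OF sx, of f] v_rename.hyps
    by (intro variant.v_rename free_for_inst sx) auto
  then show ?case using inst_rename_commute[OF v_rename.prems v_rename.hyps] by simp
qed (simp_all add: variant.v_refl variant.v_Neg variant.v_Box variant.v_Imp)

section \<open>Renaming constants\<close>

primrec map_consts :: "('a \<Rightarrow> 'b) \<Rightarrow> ('p, 'a) fm \<Rightarrow> ('p, 'b) fm" where
  "map_consts h (Atom p ts) = Atom p (map (map_tm h) ts)"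
| "map_consts h (Neg f) = Neg (map_consts h f)"
| "map_consts h (Box f) = Box (map_consts h f)"
| "map_consts h (All x f) = All x (map_consts h f)"
| "map_consts h (Imp f g) = Imp (map_consts h f) (map_consts h g)"

lemma map_fm_id: "map_fm id h f = map_consts h f"
  by (induction f) auto

lemma map_consts_comp: "map_consts h (map_consts g f) = map_consts (h \<circ> g) f"
  by (induction f) (auto simp: tm.map_comp comp_def)

lemma fv_map_consts: "fv (map_consts h f) = fv f"
proof (induction f)
  case (Atom p ts)
  have iff: "map_tm h t = Var x \<longleftrightarrow> t = Var x" for t x
    by (cases t) auto
  have "Var x \<in> map_tm h ` set ts \<longleftrightarrow> Var x \<in> set ts" for x
    by (metis iff image_iff)
  then show ?case by simp
qed auto

lemma free_for_map_consts: "free_for y x (map_consts h f) = free_for y x f"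
  by (induction f) (auto simp: fv_map_consts)

lemma map_consts_inst: "map_consts h (inst s f) = inst (map_tm h \<circ> s) (map_consts h f)"
proof (induction f arbitrary: s)
  case (Atom p ts)
  have "map_tm h (subst_tm s t) = subst_tm (\<lambda>a. map_tm h (s a)) (map_tm h t)" for t
    by (cases t) auto
  then show ?case by (simp add: comp_def)
next
  case (All x f)
  have "(\<lambda>a. map_tm h (if a = x then Var x else s a)) = (\<lambda>a. map_tm h (s a))(x := Var x)"
    by auto
  then show ?case using All.IH by (simp add: comp_def)
qed auto

lemma map_consts_subst_Cst: "map_consts h (subst x (Cst k) f) = subst x (Cst (h k)) (map_consts h f)"
proof -
  have "map_tm h \<circ> Var(x := Cst k) = Var(x := Cst (h k))" by auto
  then show ?thesis unfolding subst_def by (simp add: map_consts_inst)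
qed

lemma map_consts_subst_Var: "map_consts h (subst x (Var y) f) = subst x (Var y) (map_consts h f)"
proof -
  have "map_tm h \<circ> Var(x := Var y) = Var(x := Var y)" by auto
  then show ?thesis unfolding subst_def by (simp add: map_consts_inst)
qed

lemma variant_map_consts: "variant f g \<Longrightarrow> variant (map_consts h f) (map_consts h g)"
proof (induction rule: variant.induct)
  case (v_sym f g)
  show ?case by (rule variant.v_sym[OF v_sym.IH])
next
  case (v_trans f g h)
  show ?case by (rule variant.v_trans[OF v_trans.IH])
next
  case (v_void x f)
  then show ?case using variant.v_void[of x "map_consts h f"] by (simp add: fv_map_consts)
next
  case (v_rename y x f)
  then show ?case using variant.v_rename[of y x "map_consts h f"]
    by (simp add: fv_map_consts free_for_map_consts map_consts_subst_Var)
qed (simp_all add: variant.v_refl variant.v_Neg variant.v_Box variant.v_All variant.v_Imp)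

lemma map_consts_cong_const_set: "\<forall>k\<in>const_set f. h k = h' k \<Longrightarrow> map_consts h f = map_consts h' f"
proof (induction f)
  case (Atom p ts)
  have "map_tm h t = map_tm h' t" if "t \<in> set ts" for t
    using Atom.prems that by (cases t) auto
  then show ?case by simp
qed auto

lemma finite_const_set: "finite (const_set f)"
proof (induction f)
  case (Atom p ts)
  have "{k. Cst k \<in> set ts} \<subseteq> (\<lambda>t. case t of Cst k \<Rightarrow> k | Var x \<Rightarrow> undefined) ` set ts"
    by (auto intro: rev_image_eqI)
  then show ?case by (simp add: finite_subset)
qed auto

lemma fv_foldr_Imp: "fv (foldr Imp gs \<phi>) = (\<Union>g\<in>set gs. fv g) \<union> fv \<phi>"
  by (induction gs) auto

lemma const_set_foldr_Imp: "const_set (foldr Imp gs \<phi>) = (\<Union>g\<in>set gs. const_set g) \<union> const_set \<phi>"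
  by (induction gs) auto

lemma map_consts_foldr_Imp: "map_consts h (foldr Imp gs \<phi>) = foldr Imp (map (map_consts h) gs) (map_consts h \<phi>)"
  by (induction gs) auto

section \<open>The canonical valuation of an open saturated set\<close>

definition label_of :: "('p, 'c) sfm set \<Rightarrow> ('p, 'c + nat) fm \<Rightarrow> tv option" where
  "label_of H \<chi> = (if \<exists>L g. (L, g) \<in> H \<and> variant g \<chi>
     then Some (SOME L. \<exists>g. (L, g) \<in> H \<and> variant g \<chi>) else None)"

lemma label_of_eqI:
  assumes "\<not> branch_closed H" and "(L, g) \<in> H" and "variant g \<chi>"
  shows "label_of H \<chi> = Some L"
proof -
  let ?P = "\<lambda>L. \<exists>g. (L, g) \<in> H \<and> variant g \<chi>"
  have "?P L" using assms by blast
  then obtain g' where g': "((SOME L. ?P L), g') \<in> H" "variant g' \<chi>"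
    using someI_ex[of ?P] by blast
  have "variant g g'" using assms(3) g'(2) by (blast intro: variant.v_trans variant.v_sym)
  then have "L = (SOME L. ?P L)" using assms(1,2) g'(1) unfolding branch_closed_def by blast
  then show ?thesis unfolding label_of_def using assms(2,3) by auto
qed

lemma label_of_variant: "variant \<chi> \<chi>' \<Longrightarrow> label_of H \<chi> = label_of H \<chi>'"
proof -
  assume "variant \<chi> \<chi>'"
  then have "variant g \<chi> \<longleftrightarrow> variant g \<chi>'" for g
    by (blast intro: variant.v_trans variant.v_sym)
  then show ?thesis unfolding label_of_def by simp
qed

definition choose_label :: "tv option \<Rightarrow> tv set \<Rightarrow> tv" where
  "choose_label l X = (if l \<noteq> None \<and> the l \<in> X then the l else SOME a. a \<in> X)"

lemma choose_label_in: "X \<noteq> {} \<Longrightarrow> choose_label l X \<in> X"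
  unfolding choose_label_def by (auto intro: someI_ex)

lemma choose_label_Some: "L \<in> X \<Longrightarrow> choose_label (Some L) X = L"
  unfolding choose_label_def by simp

lemma truth_tables_nonempty: "negT a \<noteq> {}" "boxT a \<noteq> {}" "impT a b \<noteq> {}"
  by (cases a; cases b; simp)+

lemma forallT_nonempty: "X \<noteq> {} \<Longrightarrow> forallT X \<noteq> {}"
  unfolding forallT_def using ex_has_least_nat[of "\<lambda>a. a \<in> X" _ rank] by blast

lemma rank_inject: "rank a = rank b \<longleftrightarrow> a = b"
  by (cases a; cases b) auto

lemma forallT_eq_singleton:
  assumes L: "L \<in> X" and least: "\<forall>M\<in>X. rank L \<le> rank M"
  shows "forallT X = {L}"
proof -
  have "a = L" if "a \<in> X" "\<forall>b\<in>X. rank a \<le> rank b" for a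
    using that L least by (metis le_antisym rank_inject)
  then show ?thesis using L least unfolding forallT_def by blast
qed

lemma palts_Neg_sound:
  "A \<in> set (palts L (Neg f)) \<Longrightarrow> (\<And>M. (M, f) \<in> A \<Longrightarrow> a = M) \<Longrightarrow> L \<in> negT a"
  by (cases L) auto

lemma palts_Box_sound:
  "A \<in> set (palts L (Box f)) \<Longrightarrow> (\<And>M. (M, f) \<in> A \<Longrightarrow> a = M) \<Longrightarrow> L \<in> boxT a"
  by (cases L; cases a) auto

lemma palts_Imp_sound:
  "A \<in> set (palts L (Imp f g)) \<Longrightarrow> (\<And>M. (M, f) \<in> A \<Longrightarrow> a = M) \<Longrightarrow>
    (\<And>M. (M, g) \<in> A \<Longrightarrow> b = M) \<Longrightarrow> L \<in> impT a b"
  by (cases L; cases a; cases b) auto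

lemma palts_nonempty: "palts L (Neg f) \<noteq> []" "palts L (Box f) \<noteq> []" "palts L (Imp f g) \<noteq> []"
  by (cases L; simp)+

text \<open>The labels that the re-used t\<forall>- and f\<forall>-rules give to the instances other than the
  one for the fresh constant.\<close>
fun reuse_labels :: "tv \<Rightarrow> tv set" where
  "reuse_labels Tt = {Tt, TT}"
| "reuse_labels Ff = {Ff, TT, Tt}"
| "reuse_labels _ = {}"

lemma rank_reuse_labels: "M \<in> reuse_labels L \<Longrightarrow> rank L \<le> rank M"
  by (cases L) auto

definition hintikka :: "('p, 'c) sfm set \<Rightarrow> ('c + nat) set \<Rightarrow> bool" where
  "hintikka H B \<longleftrightarrow>
   (\<forall>L f. (L, f) \<in> H \<longrightarrow> palts L f \<noteq> [] \<longrightarrow> (\<exists>A\<in>set (palts L f). A \<subseteq> H)) \<and>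
   (\<forall>x g. (TT, All x g) \<in> H \<longrightarrow> (\<forall>k\<in>B. (TT, subst x (Cst k) g) \<in> H)) \<and>
   (\<forall>x g. (FF, All x g) \<in> H \<longrightarrow> (\<exists>k\<in>B. (FF, subst x (Cst k) g) \<in> H)) \<and>
   (\<forall>L x g. L \<in> {Tt, Ff} \<longrightarrow> (L, All x g) \<in> H \<longrightarrow>
      (\<exists>c\<in>B. (L, subst x (Cst c) g) \<in> H \<and>
         (\<forall>k\<in>B. k \<noteq> c \<longrightarrow> (\<exists>M\<in>reuse_labels L. (M, subst x (Cst k) g) \<in> H))))"

lemma hintikkaD:
  assumes "hintikka H B"
  shows hintikka_alternative: "(L, f) \<in> H \<Longrightarrow> palts L f \<noteq> [] \<Longrightarrow> \<exists>A\<in>set (palts L f). A \<subseteq> H"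
    and hintikka_TT_All: "(TT, All x g) \<in> H \<Longrightarrow> k \<in> B \<Longrightarrow> (TT, subst x (Cst k) g) \<in> H"
    and hintikka_FF_All: "(FF, All x g) \<in> H \<Longrightarrow> \<exists>k\<in>B. (FF, subst x (Cst k) g) \<in> H"
  using assms unfolding hintikka_def by simp_all

lemma hintikka_reuse_All:
  assumes "hintikka H B" and "L \<in> {Tt, Ff}" and "(L, All x g) \<in> H"
  shows "\<exists>c\<in>B. (L, subst x (Cst c) g) \<in> H \<and>
    (\<forall>k\<in>B. k \<noteq> c \<longrightarrow> (\<exists>M\<in>reuse_labels L. (M, subst x (Cst k) g) \<in> H))"
proof -
  have "\<forall>L x g. L \<in> {Tt, Ff} \<longrightarrow> (L, All x g) \<in> H \<longrightarrow>
      (\<exists>c\<in>B. (L, subst x (Cst c) g) \<in> H \<and>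
         (\<forall>k\<in>B. k \<noteq> c \<longrightarrow> (\<exists>M\<in>reuse_labels L. (M, subst x (Cst k) g) \<in> H)))"
    using assms(1) unfolding hintikka_def by (elim conjE)
  then show ?thesis using assms(2,3) by blast
qed

primrec canon_val ::
  "('p, 'c) sfm set \<Rightarrow> ('c + nat) set \<Rightarrow> (nat \<Rightarrow> 'c + nat) \<Rightarrow> ('p, 'c + nat) fm \<Rightarrow> tv" where
  "canon_val H B e (Atom p ts) = choose_label (label_of H (inst (Cst \<circ> e) (Atom p ts))) UNIV"
| "canon_val H B e (Neg f) =
     choose_label (label_of H (inst (Cst \<circ> e) (Neg f))) (negT (canon_val H B e f))"
| "canon_val H B e (Box f) =
     choose_label (label_of H (inst (Cst \<circ> e) (Box f))) (boxT (canon_val H B e f))"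
| "canon_val H B e (Imp f g) =
     choose_label (label_of H (inst (Cst \<circ> e) (Imp f g)))
       (impT (canon_val H B e f) (canon_val H B e g))"
| "canon_val H B e (All x f) = (SOME a. a \<in> forallT ((\<lambda>k. canon_val H B (e(x := k)) f) ` B))"

lemma canon_val_legal:
  "canon_val H B e (Neg f) \<in> negT (canon_val H B e f)"
  "canon_val H B e (Box f) \<in> boxT (canon_val H B e f)"
  "canon_val H B e (Imp f g) \<in> impT (canon_val H B e f) (canon_val H B e g)"
  "B \<noteq> {} \<Longrightarrow> canon_val H B e (All x f) \<in> forallT ((\<lambda>k. canon_val H B (e(x := k)) f) ` B)"
  by (simp_all add: choose_label_in truth_tables_nonempty some_in_eq forallT_nonempty)

lemma canon_val_cong: "\<forall>z\<in>fv f. e z = e' z \<Longrightarrow> canon_val H B e f = canon_val H B e' f"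
proof (induction f arbitrary: e e')
  case (Atom p ts)
  have "inst (Cst \<circ> e) (Atom p ts) = inst (Cst \<circ> e') (Atom p ts)"
    using Atom by (intro inst_cong) auto
  then show ?case by (simp only: canon_val.simps)
next
  case (Neg f)
  have "inst (Cst \<circ> e) (Neg f) = inst (Cst \<circ> e') (Neg f)" using Neg.prems by (intro inst_cong) auto
  moreover have "canon_val H B e f = canon_val H B e' f" using Neg by auto
  ultimately show ?case by (simp only: canon_val.simps)
next
  case (Box f)
  have "inst (Cst \<circ> e) (Box f) = inst (Cst \<circ> e') (Box f)" using Box.prems by (intro inst_cong) auto
  moreover have "canon_val H B e f = canon_val H B e' f" using Box by auto
  ultimately show ?case by (simp only: canon_val.simps)
next
  case (Imp f g)
  have "inst (Cst \<circ> e) (Imp f g) = inst (Cst \<circ> e') (Imp f g)"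
    using Imp.prems by (intro inst_cong) auto
  moreover have "canon_val H B e f = canon_val H B e' f" "canon_val H B e g = canon_val H B e' g"
    using Imp by auto
  ultimately show ?case by (simp only: canon_val.simps)
next
  case (All x f)
  have "canon_val H B (e(x := k)) f = canon_val H B (e'(x := k)) f" for k
    using All by auto
  then show ?case by simp
qed

definition subst_assign :: "(nat \<Rightarrow> 'k tm) \<Rightarrow> (nat \<Rightarrow> 'k) \<Rightarrow> nat \<Rightarrow> 'k" where
  "subst_assign s e z = (case s z of Var w \<Rightarrow> e w | Cst k \<Rightarrow> k)"

lemma inst_subst_assign:
  "capture_free s f \<Longrightarrow> inst (Cst \<circ> e) (inst s f) = inst (Cst \<circ> subst_assign s e) f"
proof -
  have "(\<lambda>z. subst_tm (Cst \<circ> e) (s z)) = Cst \<circ> subst_assign s e"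
    by (auto simp: subst_assign_def split: tm.split)
  then show "capture_free s f \<Longrightarrow> ?thesis" using inst_inst[of s f "Cst \<circ> e"] by metis
qed

lemma canon_val_inst:
  "capture_free s f \<Longrightarrow> canon_val H B e (inst s f) = canon_val H B (subst_assign s e) f"
proof (induction f arbitrary: s e)
  case (Atom p ts)
  have "canon_val H B e (inst s (Atom p ts)) =
      choose_label (label_of H (inst (Cst \<circ> e) (inst s (Atom p ts)))) UNIV"
    by simp
  then show ?case using inst_subst_assign[OF Atom.prems] by (simp only: canon_val.simps)
next
  case (Neg f)
  have "canon_val H B e (inst s f) = canon_val H B (subst_assign s e) f" using Neg by simp
  then show ?case using inst_subst_assign[OF Neg.prems] by (simp only: canon_val.simps inst.simps)
next
  case (Box f)
  have "canon_val H B e (inst s f) = canon_val H B (subst_assign s e) f" using Box by simp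
  then show ?case using inst_subst_assign[OF Box.prems] by (simp only: canon_val.simps inst.simps)
next
  case (Imp f g)
  have "canon_val H B e (inst s f) = canon_val H B (subst_assign s e) f"
    "canon_val H B e (inst s g) = canon_val H B (subst_assign s e) g"
    using Imp by auto
  then show ?case using inst_subst_assign[OF Imp.prems] by (simp only: canon_val.simps inst.simps)
next
  case (All x f)
  have f: "capture_free (s(x := Var x)) f" and no_capture: "\<forall>z\<in>fv f - {x}. s z \<noteq> Var x"
    using All.prems by auto
  have "canon_val H B (e(x := k)) (inst (s(x := Var x)) f) = canon_val H B ((subst_assign s e)(x := k)) f"
    for k
  proof -
    have "canon_val H B (e(x := k)) (inst (s(x := Var x)) f) =
        canon_val H B (subst_assign (s(x := Var x)) (e(x := k))) f"
      using All.IH[OF f] .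
    also have "\<dots> = canon_val H B ((subst_assign s e)(x := k)) f"
    proof (intro canon_val_cong ballI)
      fix z assume "z \<in> fv f"
      then show "subst_assign (s(x := Var x)) (e(x := k)) z = ((subst_assign s e)(x := k)) z"
        using no_capture by (cases "z = x") (auto simp: subst_assign_def split: tm.split)
    qed
    finally show ?thesis .
  qed
  then show ?case by simp
qed

lemma canon_val_subst: "canon_val H B e (subst x (Cst k) f) = canon_val H B (e(x := k)) f"
proof -
  have "canon_val H B e (inst (Var(x := Cst k)) f) =
      canon_val H B (subst_assign (Var(x := Cst k)) e) f"
    by (simp add: canon_val_inst capture_free_ground_or_id)
  moreover have "subst_assign (Var(x := Cst k)) e = e(x := k)" by (auto simp: subst_assign_def)
  ultimately show ?thesis unfolding subst_def by simp
qed

lemma canon_val_rename: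
  assumes y: "y \<notin> fv (All x f)" and "free_for y x f"
  shows "canon_val H B (e(y := k)) (subst x (Var y) f) = canon_val H B (e(x := k)) f"
proof -
  have "canon_val H B (e(y := k)) (subst x (Var y) f) =
      canon_val H B (subst_assign (Var(x := Var y)) (e(y := k))) f"
    unfolding subst_def using canon_val_inst[OF capture_free_rename[OF assms(2)]] .
  also have "\<dots> = canon_val H B (e(x := k)) f"
  proof (intro canon_val_cong ballI)
    fix z assume "z \<in> fv f"
    then show "subst_assign (Var(x := Var y)) (e(y := k)) z = (e(x := k)) z"
      using y by (cases "z = x") (auto simp: subst_assign_def)
  qed
  finally show ?thesis .
qed

lemma canon_val_variant: "variant f g \<Longrightarrow> B \<noteq> {} \<Longrightarrow> canon_val H B e f = canon_val H B e g"
proof (induction arbitrary: e rule: variant.induct)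
  case (v_Neg f g)
  have "label_of H (inst (Cst \<circ> e) (Neg f)) = label_of H (inst (Cst \<circ> e) (Neg g))"
    by (intro label_of_variant variant_inst variant.v_Neg v_Neg.hyps) simp
  then show ?case using v_Neg.IH[OF v_Neg.prems] by (simp only: canon_val.simps)
next
  case (v_Box f g)
  have "label_of H (inst (Cst \<circ> e) (Box f)) = label_of H (inst (Cst \<circ> e) (Box g))"
    by (intro label_of_variant variant_inst variant.v_Box v_Box.hyps) simp
  then show ?case using v_Box.IH[OF v_Box.prems] by (simp only: canon_val.simps)
next
  case (v_Imp f g f' g')
  have "label_of H (inst (Cst \<circ> e) (Imp f f')) = label_of H (inst (Cst \<circ> e) (Imp g g'))"
    by (intro label_of_variant variant_inst variant.v_Imp v_Imp.hyps) simp
  then show ?case using v_Imp.IH[OF v_Imp.prems] by (simp only: canon_val.simps)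
next
  case (v_All f g x)
  then show ?case by simp
next
  case (v_void x f)
  have "canon_val H B (e(x := k)) f = canon_val H B e f" for k
    using v_void.hyps by (intro canon_val_cong) auto
  then have "(\<lambda>k. canon_val H B (e(x := k)) f) ` B = {canon_val H B e f}"
    using v_void.prems by auto
  then show ?case using forallT_eq_singleton[of "canon_val H B e f"] by simp
next
  case (v_rename y x f)
  then show ?case by (simp add: canon_val_rename)
next
  case (v_sym f g)
  then show ?case using v_sym.IH[OF v_sym.prems] by simp
next
  case (v_trans f g h)
  then show ?case using v_trans.IH(1,2)[OF v_trans.prems] by simp
qed simp

lemma inst_upd_subst:
  "subst x (Cst k) (inst ((Cst \<circ> e)(x := Var x)) f) = inst (Cst \<circ> e(x := k)) f"
proof -
  have "subst x (Cst k) (inst ((Cst \<circ> e)(x := Var x)) f) =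
      inst (\<lambda>z. subst_tm (Var(x := Cst k)) (((Cst \<circ> e)(x := Var x)) z)) f"
    unfolding subst_def by (simp add: inst_inst capture_free_ground_or_id)
  also have "(\<lambda>z. subst_tm (Var(x := Cst k)) (((Cst \<circ> e)(x := Var x)) z)) = Cst \<circ> e(x := k)"
    by auto
  finally show ?thesis .
qed

lemma hintikka_forallT:
  assumes hin: "hintikka H B" and B: "B \<noteq> {}" and L: "(L, All x g) \<in> H"
    and instance_val: "\<And>k M. (M, subst x (Cst k) g) \<in> H \<Longrightarrow> val k = M"
  shows "forallT (val ` B) = {L}"
proof -
  consider "L = TT" | "L = FF" | "L \<in> {Tt, Ff}" by (cases L) auto
  then have "L \<in> val ` B \<and> (\<forall>M\<in>val ` B. rank L \<le> rank M)"
  proof cases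
    case 1
    then have "\<forall>k\<in>B. val k = TT" using hintikka_TT_All[OF hin] L instance_val by blast
    then have "val ` B = {TT}" using B by auto
    then show ?thesis using 1 by simp
  next
    case 2
    then obtain k where "k \<in> B" "(FF, subst x (Cst k) g) \<in> H"
      using hintikka_FF_All[OF hin] L by blast
    then show ?thesis using 2 instance_val by force
  next
    case 3
    then obtain c where c: "c \<in> B" "(L, subst x (Cst c) g) \<in> H"
      and others: "\<forall>k\<in>B. k \<noteq> c \<longrightarrow> (\<exists>M\<in>reuse_labels L. (M, subst x (Cst k) g) \<in> H)"
      using hintikka_reuse_All[OF hin _ L] by blast
    have "rank L \<le> rank (val k)" if "k \<in> B" for k
    proof (cases "k = c")
      case True
      then show ?thesis using c instance_val by simp
    next
      case False
      then obtain M where "M \<in> reuse_labels L" "(M, subst x (Cst k) g) \<in> H"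
        using others \<open>k \<in> B\<close> by blast
      then show ?thesis using instance_val rank_reuse_labels by metis
    qed
    moreover have "L \<in> val ` B" using c instance_val by force
    ultimately show ?thesis by blast
  qed
  then show ?thesis using forallT_eq_singleton by blast
qed

lemma canon_val_label:
  assumes unclosed: "\<not> branch_closed H" and hin: "hintikka H B" and B: "B \<noteq> {}"
  shows "(L, inst (Cst \<circ> e) \<psi>) \<in> H \<Longrightarrow> canon_val H B e \<psi> = L"
proof (induction \<psi> arbitrary: e L)
  case (Atom p ts)
  then show ?case using label_of_eqI[OF unclosed Atom variant.v_refl]
    by (simp only: canon_val.simps choose_label_Some[OF UNIV_I])
next
  case (Neg f)
  obtain A where A: "A \<in> set (palts L (Neg (inst (Cst \<circ> e) f)))" "A \<subseteq> H"
    using hintikka_alternative[OF hin Neg.prems[unfolded inst.simps] palts_nonempty(1)] by blast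
  have "canon_val H B e f = M" if "(M, inst (Cst \<circ> e) f) \<in> A" for M using Neg.IH A(2) that by blast
  then have "L \<in> negT (canon_val H B e f)" using palts_Neg_sound[OF A(1)] by blast
  then show ?case using label_of_eqI[OF unclosed Neg.prems variant.v_refl]
    by (simp only: canon_val.simps choose_label_Some)
next
  case (Box f)
  obtain A where A: "A \<in> set (palts L (Box (inst (Cst \<circ> e) f)))" "A \<subseteq> H"
    using hintikka_alternative[OF hin Box.prems[unfolded inst.simps] palts_nonempty(2)] by blast
  have "canon_val H B e f = M" if "(M, inst (Cst \<circ> e) f) \<in> A" for M using Box.IH A(2) that by blast
  then have "L \<in> boxT (canon_val H B e f)" using palts_Box_sound[OF A(1)] by blast
  then show ?case using label_of_eqI[OF unclosed Box.prems variant.v_refl]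
    by (simp only: canon_val.simps choose_label_Some)
next
  case (Imp f g)
  obtain A where A: "A \<in> set (palts L (Imp (inst (Cst \<circ> e) f) (inst (Cst \<circ> e) g)))" "A \<subseteq> H"
    using hintikka_alternative[OF hin Imp.prems[unfolded inst.simps] palts_nonempty(3)] by blast
  have "canon_val H B e f = M" if "(M, inst (Cst \<circ> e) f) \<in> A" for M using Imp.IH(1) A(2) that by blast
  moreover have "canon_val H B e g = M" if "(M, inst (Cst \<circ> e) g) \<in> A" for M
    using Imp.IH(2) A(2) that by blast
  ultimately have "L \<in> impT (canon_val H B e f) (canon_val H B e g)"
    using palts_Imp_sound[OF A(1)] by blast
  then show ?case using label_of_eqI[OF unclosed Imp.prems variant.v_refl]
    by (simp only: canon_val.simps choose_label_Some)
next
  case (All x f)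
  let ?g = "inst ((Cst \<circ> e)(x := Var x)) f"
  have "(L, All x ?g) \<in> H" using All.prems by (simp only: inst.simps)
  moreover have "canon_val H B (e(x := k)) f = M" if "(M, subst x (Cst k) ?g) \<in> H" for k M
    using All.IH that inst_upd_subst by metis
  ultimately have "forallT ((\<lambda>k. canon_val H B (e(x := k)) f) ` B) = {L}"
    by (rule hintikka_forallT[OF hin B])
  then show ?case by simp
qed

section \<open>Saturating a branch that cannot be closed\<close>

text \<open>The branch is kept as a list so that its formulas can be enumerated; the second component
  records the constants introduced by quantifier rules, as in \<open>closable\<close>.\<close>
type_synonym ('p, 'c) state = "('p, 'c) sfm list \<times> (('p, 'c) sfm \<Rightarrow> ('c + nat) option)"

definition open_state :: "'c set \<Rightarrow> ('c + nat) set \<Rightarrow> ('p, 'c) state \<Rightarrow> bool" where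
  "open_state C B st \<longleftrightarrow> \<not> closable C (set (fst st)) (snd st) \<and>
    (\<forall>L x g c. snd st (L, All x g) = Some c \<longrightarrow> c \<in> B \<and> (L, subst x (Cst c) g) \<in> set (fst st))"

definition state_extends :: "('p, 'c) state \<Rightarrow> ('p, 'c) state \<Rightarrow> bool" where
  "state_extends st st' \<longleftrightarrow>
    (\<exists>ys. fst st' = fst st @ ys) \<and> (\<forall>\<sigma> c. snd st \<sigma> = Some c \<longrightarrow> snd st' \<sigma> = Some c)"

lemma state_extends_refl: "state_extends st st"
  unfolding state_extends_def by auto

lemma state_extends_trans: "state_extends a b \<Longrightarrow> state_extends b c \<Longrightarrow> state_extends a c"
  unfolding state_extends_def by (metis append.assoc)

text \<open>\<open>handled L f k S W\<close>: the rule for \<open>L:f\<close> has been applied on the branch \<open>S\<close>, a quantifier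
  rule also with the constant \<open>k\<close>.\<close>
definition handled :: "tv \<Rightarrow> ('p, 'c + nat) fm \<Rightarrow> 'c + nat \<Rightarrow> ('p, 'c) sfm set
    \<Rightarrow> (('p, 'c) sfm \<Rightarrow> ('c + nat) option) \<Rightarrow> bool" where
  "handled L f k S W \<longleftrightarrow> (palts L f \<noteq> [] \<longrightarrow> (\<exists>A\<in>set (palts L f). A \<subseteq> S)) \<and>
   (\<forall>x g. f = All x g \<longrightarrow>
     (L = TT \<longrightarrow> (TT, subst x (Cst k) g) \<in> S) \<and>
     (L = FF \<longrightarrow> W (FF, f) \<noteq> None) \<and>
     (L \<in> {Tt, Ff} \<longrightarrow> (\<exists>c. W (L, f) = Some c \<and>
         (k \<noteq> c \<longrightarrow> (\<exists>M\<in>reuse_labels L. (M, subst x (Cst k) g) \<in> S)))))"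

definition step_handles ::
  "'c set \<Rightarrow> ('c + nat) set \<Rightarrow> ('p, 'c) state \<Rightarrow> tv \<Rightarrow> ('p, 'c + nat) fm \<Rightarrow> 'c + nat
    \<Rightarrow> ('p, 'c) state \<Rightarrow> bool" where
  "step_handles C B st L f k st' \<longleftrightarrow>
    open_state C B st' \<and> state_extends st st' \<and> handled L f k (set (fst st')) (snd st')"

definition append_set :: "'a list \<Rightarrow> 'a set \<Rightarrow> 'a list" where
  "append_set xs A = xs @ (SOME ys. set ys = A)"

lemma set_append_set: "finite A \<Longrightarrow> set (append_set xs A) = set xs \<union> A"
  unfolding append_set_def using someI_ex[OF finite_list] by auto

lemma step_handles_append:
  assumes "open_state C B (lst, W)" and "finite A" and "\<not> closable C (set lst \<union> A) W"
    and "handled L f k (set lst \<union> A) W"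
  shows "step_handles C B (lst, W) L f k (append_set lst A, W)"
  using assms set_append_set[OF assms(2)]
  unfolding step_handles_def open_state_def state_extends_def append_set_def by auto

lemma step_handles_append_witness:
  assumes "open_state C B (lst, W)" and "finite A" and "W (M, All x g) = None" and "c \<in> B"
    and "(M, subst x (Cst c) g) \<in> A"
    and "\<not> closable C (set lst \<union> A) (W((M, All x g) := Some c))"
    and "handled L f k (set lst \<union> A) (W((M, All x g) := Some c))"
  shows "step_handles C B (lst, W) L f k (append_set lst A, W((M, All x g) := Some c))"
  using assms set_append_set[OF assms(2)]
  unfolding step_handles_def open_state_def state_extends_def append_set_def by auto

lemma step_handles_already:
  "open_state C B (lst, W) \<Longrightarrow> handled L f k (set lst) W \<Longrightarrow> \<exists>st'. step_handles C B (lst, W) L f k st'"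
  unfolding step_handles_def using state_extends_refl by fastforce

lemma finite_palts: "A \<in> set (palts L f) \<Longrightarrow> finite A"
  by (cases L; cases f) auto

lemma step_connective:
  assumes st: "open_state C B (lst, W)" and "(L, f) \<in> set lst" and alts: "palts L f \<noteq> []"
  shows "\<exists>st'. step_handles C B (lst, W) L f k st'"
proof -
  have "\<not> closable C (set lst) W" using st unfolding open_state_def by simp
  then obtain A where A: "A \<in> set (palts L f)" "\<not> closable C (set lst \<union> A) W"
    using closable.cl_prop[OF assms(2) alts, of C W] by blast
  have "f \<noteq> All x g" for x g using alts by auto
  then have "handled L f k (set lst \<union> A) W" using A(1) unfolding handled_def by blast
  then show ?thesis using step_handles_append[OF st finite_palts[OF A(1)] A(2)] by blast
qed

lemma step_TAll:
  assumes st: "open_state C B (lst, W)" and "(TT, All x g) \<in> set lst" and "tconst C k"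
  shows "\<exists>st'. step_handles C B (lst, W) TT (All x g) k st'"
proof -
  let ?A = "{(TT, subst x (Cst k) g)}"
  have "\<not> closable C (set lst) W" using st unfolding open_state_def by simp
  then have "\<not> closable C (set lst \<union> ?A) W" using closable.cl_TAll[OF assms(2,3)] by auto
  moreover have "handled TT (All x g) k (set lst \<union> ?A) W" unfolding handled_def by simp
  ultimately show ?thesis using step_handles_append[OF st] by blast
qed

lemma step_FAll:
  assumes st: "open_state C B (lst, W)" and "(FF, All x g) \<in> set lst"
    and "tconst C c" and "c \<in> B" and "c \<notin> bconsts (set lst)"
  shows "\<exists>st'. step_handles C B (lst, W) FF (All x g) k st'"
proof (cases "W (FF, All x g)")
  case None
  let ?A = "{(FF, subst x (Cst c) g)}" and ?W = "W((FF, All x g) := Some c)"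
  have "\<not> closable C (set lst) W" using st unfolding open_state_def by simp
  then have "\<not> closable C (insert (FF, subst x (Cst c) g) (set lst)) ?W"
    using closable.cl_FAll[where W = W, OF assms(2) None assms(3,5)] by blast
  then have "\<not> closable C (set lst \<union> ?A) ?W" by simp
  moreover have "handled FF (All x g) k (set lst \<union> ?A) ?W" unfolding handled_def by simp
  ultimately show ?thesis using step_handles_append_witness[OF st _ None assms(4)] by blast
next
  case (Some c')
  then have "handled FF (All x g) k (set lst) W" unfolding handled_def by simp
  then show ?thesis using step_handles_already[OF st] by blast
qed

lemma unclosable_first_instance:
  assumes "L \<in> {Tt, Ff}" and "\<not> closable C S W" and "(L, All x g) \<in> S"
    and "W (L, All x g) = None" and "tconst C c" and "c \<notin> bconsts S" and "tconst C k" and "k \<noteq> c"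
  shows "\<exists>M\<in>reuse_labels L. \<not> closable C (S \<union> {(L, subst x (Cst c) g), (M, subst x (Cst k) g)})
    (W((L, All x g) := Some c))"
proof (cases L)
  case Tt
  then show ?thesis
    using closable.cl_tAll[where W = W, OF assms(3,4)[unfolded Tt] assms(5-8)] assms(2) by auto
next
  case Ff
  then show ?thesis
    using closable.cl_fAll[where W = W, OF assms(3,4)[unfolded Ff] assms(5-8)] assms(2) by auto
qed (use assms(1) in simp_all)

lemma unclosable_reuse_instance:
  assumes "L \<in> {Tt, Ff}" and "\<not> closable C S W" and "(L, All x g) \<in> S"
    and "W (L, All x g) = Some c" and "tconst C k" and "k \<noteq> c"
  shows "\<exists>M\<in>reuse_labels L. \<not> closable C (S \<union> {(M, subst x (Cst k) g)}) W"
proof (cases L)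
  case Tt
  then show ?thesis
    using closable.cl_tAll_re[where W = W, OF assms(3,4)[unfolded Tt] assms(5,6)] assms(2) by auto
next
  case Ff
  then show ?thesis
    using closable.cl_fAll_re[where W = W, OF assms(3,4)[unfolded Ff] assms(5,6)] assms(2) by auto
qed (use assms(1) in simp_all)

lemma step_reuse_All:
  assumes L: "L \<in> {Tt, Ff}" and st: "open_state C B (lst, W)" and "(L, All x g) \<in> set lst"
    and "tconst C k" and "tconst C c" and "c \<in> B" and "c \<notin> bconsts (set lst)" and "k \<noteq> c"
  shows "\<exists>st'. step_handles C B (lst, W) L (All x g) k st'"
proof -
  have unclosed: "\<not> closable C (set lst) W" using st unfolding open_state_def by simp
  show ?thesis
  proof (cases "W (L, All x g)")
    case None
    let ?W = "W((L, All x g) := Some c)"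
    obtain M where M: "M \<in> reuse_labels L"
      and nc: "\<not> closable C (set lst \<union> {(L, subst x (Cst c) g), (M, subst x (Cst k) g)}) ?W"
      using unclosable_first_instance[OF L unclosed assms(3) None assms(5,7,4,8)] by blast
    have "handled L (All x g) k (set lst \<union> {(L, subst x (Cst c) g), (M, subst x (Cst k) g)}) ?W"
      using L M unfolding handled_def by auto
    from step_handles_append_witness[OF st _ None assms(6) _ nc this] show ?thesis by blast
  next
    case (Some c')
    show ?thesis
    proof (cases "k = c'")
      case True
      then have "handled L (All x g) k (set lst) W" using L Some unfolding handled_def by auto
      then show ?thesis using step_handles_already[OF st] by blast
    next
      case False
      obtain M where M: "M \<in> reuse_labels L"
        and nc: "\<not> closable C (set lst \<union> {(M, subst x (Cst k) g)}) W"
        using unclosable_reuse_instance[OF L unclosed assms(3) Some assms(4) False] by blast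
      have "handled L (All x g) k (set lst \<union> {(M, subst x (Cst k) g)}) W"
        using L M Some False unfolding handled_def by auto
      from step_handles_append[OF st _ nc this] show ?thesis by blast
    qed
  qed
qed

lemma finite_bconsts: "finite S \<Longrightarrow> finite (bconsts S)"
  unfolding bconsts_def using finite_const_set by auto

lemma ex_Inr_notin: "finite (F :: ('c + nat) set) \<Longrightarrow> \<exists>n. Inr n \<notin> F"
proof (rule ccontr)
  assume "finite F" and "\<nexists>n. Inr n \<notin> F"
  then have "range Inr \<subseteq> F" by auto
  then have "finite (range (Inr :: nat \<Rightarrow> 'c + nat))" using \<open>finite F\<close> finite_subset by blast
  then have "finite (UNIV :: nat set)" using finite_imageD[of Inr UNIV] by auto
  then show False by simp
qed

lemma step_exists:
  assumes st: "open_state C B (lst, W)" and mem: "(L, f) \<in> set lst" and "k \<in> B"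
    and B: "\<forall>b\<in>B. tconst C b" "range Inr \<subseteq> B"
  shows "\<exists>st'. step_handles C B (lst, W) L f k st'"
proof (cases "\<exists>x g. f = All x g")
  case False
  show ?thesis
  proof (cases "palts L f = []")
    case True
    then have "handled L f k (set lst) W" using False unfolding handled_def by simp
    then show ?thesis using step_handles_already[OF st] by blast
  qed (rule step_connective[OF st mem])
next
  case True
  then obtain x g where f: "f = All x g" by blast
  obtain n where n: "Inr n \<notin> bconsts (set lst) \<union> {k}"
    using ex_Inr_notin finite_bconsts by (metis finite.emptyI finite_insert finite_Un finite_set)
  let ?c = "Inr n :: 'c + nat"
  have c: "tconst C ?c" "?c \<in> B" "?c \<notin> bconsts (set lst)" "k \<noteq> ?c" using n B by auto
  have k: "tconst C k" using B \<open>k \<in> B\<close> by blast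
  have mem: "(L, All x g) \<in> set lst" using mem f by simp
  consider "L = TT" | "L = FF" | "L \<in> {Tt, Ff}" by (cases L) auto
  then show ?thesis
  proof cases
    case 1
    then show ?thesis using step_TAll[OF st _ k] mem f by simp
  next
    case 2
    then show ?thesis using step_FAll[OF st _ c(1-3)] mem f by simp
  next
    case 3
    then show ?thesis using step_reuse_All[OF 3 st mem k c] f by simp
  qed
qed

text \<open>Stage \<open>n\<close> applies the rule for the \<open>a\<close>-th formula of the branch with the \<open>j\<close>-th constant,
  where \<open>(a, j)\<close> is decoded from the first component of \<open>n\<close>; so every pair recurs at arbitrarily
  late stages.\<close>
definition next_state ::
  "'c set \<Rightarrow> ('c + nat) set \<Rightarrow> (nat \<Rightarrow> 'c + nat) \<Rightarrow> ('p, 'c) state \<Rightarrow> nat \<Rightarrow> ('p, 'c) state" where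
  "next_state C B cn st n = (case prod_decode (fst (prod_decode n)) of (a, j) \<Rightarrow>
     if a < length (fst st)
     then SOME st'. step_handles C B st (fst (fst st ! a)) (snd (fst st ! a)) (cn j) st'
     else st)"

primrec state_chain ::
  "'c set \<Rightarrow> ('c + nat) set \<Rightarrow> (nat \<Rightarrow> 'c + nat) \<Rightarrow> ('p, 'c) state \<Rightarrow> nat \<Rightarrow> ('p, 'c) state" where
  "state_chain C B cn st0 0 = st0"
| "state_chain C B cn st0 (Suc n) = next_state C B cn (state_chain C B cn st0 n) n"

definition chain_union ::
  "'c set \<Rightarrow> ('c + nat) set \<Rightarrow> (nat \<Rightarrow> 'c + nat) \<Rightarrow> ('p, 'c) state \<Rightarrow> ('p, 'c) sfm set" where
  "chain_union C B cn st0 = (\<Union>n. set (fst (state_chain C B cn st0 n)))"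

context
  fixes C :: "'c set" and B :: "('c + nat) set" and cn :: "nat \<Rightarrow> 'c + nat"
    and st0 :: "('p, 'c) state"
  assumes st0: "open_state C B st0" and cn: "range cn = B"
    and B: "\<forall>b\<in>B. tconst C b" "range Inr \<subseteq> B"
begin

lemma next_state_step_handles:
  assumes st: "open_state C B st" and n: "prod_decode (fst (prod_decode n)) = (a, j)"
    and a: "a < length (fst st)"
  shows "step_handles C B st (fst (fst st ! a)) (snd (fst st ! a)) (cn j) (next_state C B cn st n)"
proof -
  obtain lst W where lst: "st = (lst, W)" by fastforce
  have "fst st ! a \<in> set lst" using a lst by simp
  then have "\<exists>st'. step_handles C B st (fst (fst st ! a)) (snd (fst st ! a)) (cn j) st'"
    using step_exists[OF st[unfolded lst], of "fst (fst st ! a)" "snd (fst st ! a)" "cn j"] cn B lst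
    by auto
  then show ?thesis unfolding next_state_def using n a by (simp add: someI_ex)
qed

lemma next_state_open_extends:
  assumes "open_state C B st"
  shows "open_state C B (next_state C B cn st n) \<and> state_extends st (next_state C B cn st n)"
proof -
  obtain a j where n: "prod_decode (fst (prod_decode n)) = (a, j)" by fastforce
  show ?thesis
  proof (cases "a < length (fst st)")
    case True
    then show ?thesis using next_state_step_handles[OF assms n] unfolding step_handles_def by simp
  next
    case False
    then have "next_state C B cn st n = st" unfolding next_state_def using n by simp
    then show ?thesis using assms state_extends_refl by simp
  qed
qed

lemma open_state_chain: "open_state C B (state_chain C B cn st0 n)"
  by (induction n) (simp_all add: st0 next_state_open_extends)

lemma state_chain_mono: "m \<le> n \<Longrightarrow> state_extends (state_chain C B cn st0 m) (state_chain C B cn st0 n)"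
proof (induction n)
  case 0
  then show ?case by (simp add: state_extends_refl)
next
  case (Suc n)
  show ?case
  proof (cases "m = Suc n")
    case False
    then have "state_extends (state_chain C B cn st0 m) (state_chain C B cn st0 n)" using Suc by simp
    moreover have "state_extends (state_chain C B cn st0 n) (state_chain C B cn st0 (Suc n))"
      using next_state_open_extends[OF open_state_chain] by simp
    ultimately show ?thesis by (rule state_extends_trans)
  qed (simp add: state_extends_refl)
qed

lemma chain_union_handled:
  assumes "(L, f) \<in> chain_union C B cn st0"
  shows "\<exists>n\<ge>m. handled L f (cn j)
    (set (fst (state_chain C B cn st0 n))) (snd (state_chain C B cn st0 n))"
proof -
  let ?ch = "state_chain C B cn st0"
  obtain m0 where "(L, f) \<in> set (fst (?ch m0))" using assms unfolding chain_union_def by blast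
  then obtain a where a: "a < length (fst (?ch m0))" "fst (?ch m0) ! a = (L, f)"
    by (metis in_set_conv_nth)
  let ?n = "prod_encode (prod_encode (a, j), max m m0)"
  have le: "max m m0 \<le> ?n" by (rule le_prod_encode_2)
  then obtain ys where "fst (?ch ?n) = fst (?ch m0) @ ys"
    using state_chain_mono[of m0 ?n] unfolding state_extends_def by auto
  then have an: "a < length (fst (?ch ?n))" "fst (?ch ?n) ! a = (L, f)"
    using a by (auto simp: nth_append)
  have "step_handles C B (?ch ?n) (fst (fst (?ch ?n) ! a)) (snd (fst (?ch ?n) ! a)) (cn j)
      (next_state C B cn (?ch ?n) ?n)"
    by (rule next_state_step_handles[OF open_state_chain]) (simp_all add: an(1))
  then have "handled L f (cn j) (set (fst (?ch (Suc ?n)))) (snd (?ch (Suc ?n)))"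
    unfolding step_handles_def an(2) by simp
  moreover have "m \<le> Suc ?n" using le by simp
  ultimately show ?thesis by blast
qed

lemma chain_union_unclosed: "\<not> branch_closed (chain_union C B cn st0)"
proof
  let ?ch = "state_chain C B cn st0"
  assume "branch_closed (chain_union C B cn st0)"
  then obtain L f L' g n1 n2 where "(L, f) \<in> set (fst (?ch n1))" "(L', g) \<in> set (fst (?ch n2))"
    and "variant f g" "L \<noteq> L'"
    unfolding branch_closed_def chain_union_def by blast
  moreover have "set (fst (?ch n)) \<subseteq> set (fst (?ch (max n1 n2)))" if "n \<le> max n1 n2" for n
    using state_chain_mono[OF that] unfolding state_extends_def by auto
  ultimately have "branch_closed (set (fst (?ch (max n1 n2))))"
    unfolding branch_closed_def by (meson max.cobounded1 max.cobounded2 subsetD)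
  then show False using open_state_chain closable.cl_closed unfolding open_state_def by blast
qed

lemma chain_union_witness:
  assumes "snd (state_chain C B cn st0 n) (L, All x g) = Some c"
  shows "c \<in> B" and "(L, subst x (Cst c) g) \<in> chain_union C B cn st0"
  using assms open_state_chain[of n] unfolding open_state_def chain_union_def by blast+

lemma chain_union_reuse_All:
  assumes L: "L \<in> {Tt, Ff}" and mem: "(L, All x g) \<in> chain_union C B cn st0"
  shows "\<exists>c\<in>B. (L, subst x (Cst c) g) \<in> chain_union C B cn st0 \<and>
    (\<forall>k\<in>B. k \<noteq> c \<longrightarrow> (\<exists>M\<in>reuse_labels L. (M, subst x (Cst k) g) \<in> chain_union C B cn st0))"
proof -
  let ?ch = "state_chain C B cn st0" and ?H = "chain_union C B cn st0"
  obtain n0 where "handled L (All x g) (cn 0) (set (fst (?ch n0))) (snd (?ch n0))"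
    using chain_union_handled[OF mem] by blast
  then obtain c where c: "snd (?ch n0) (L, All x g) = Some c"
    using L unfolding handled_def by auto
  have "\<exists>M\<in>reuse_labels L. (M, subst x (Cst k) g) \<in> ?H" if k: "k \<in> B" "k \<noteq> c" for k
  proof -
    obtain j where j: "k = cn j" using cn k(1) by blast
    obtain n where n: "n \<ge> n0" "handled L (All x g) (cn j) (set (fst (?ch n))) (snd (?ch n))"
      using chain_union_handled[OF mem] by blast
    have "snd (?ch n) (L, All x g) = Some c"
      using state_chain_mono[OF n(1)] c unfolding state_extends_def by blast
    then have "\<exists>M\<in>reuse_labels L. (M, subst x (Cst k) g) \<in> set (fst (?ch n))"
      using n(2) L k(2) j unfolding handled_def by auto
    then show ?thesis unfolding chain_union_def by blast
  qed
  then show ?thesis using chain_union_witness[OF c] by blast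
qed

lemma chain_union_hintikka: "hintikka (chain_union C B cn st0) B"
proof -
  let ?ch = "state_chain C B cn st0" and ?H = "chain_union C B cn st0"
  have sub: "set (fst (?ch n)) \<subseteq> ?H" for n unfolding chain_union_def by blast
  have "\<exists>A\<in>set (palts L f). A \<subseteq> ?H" if mem: "(L, f) \<in> ?H" and alts: "palts L f \<noteq> []" for L f
  proof -
    obtain n where "handled L f (cn 0) (set (fst (?ch n))) (snd (?ch n))"
      using chain_union_handled[OF mem] by blast
    then show ?thesis using alts sub unfolding handled_def by blast
  qed
  moreover have "(TT, subst x (Cst k) g) \<in> ?H" if mem: "(TT, All x g) \<in> ?H" and k: "k \<in> B"
    for x g k
  proof -
    obtain j where j: "k = cn j" using cn k by blast
    obtain n where "handled TT (All x g) (cn j) (set (fst (?ch n))) (snd (?ch n))"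
      using chain_union_handled[OF mem] by blast
    then show ?thesis using sub j unfolding handled_def by auto
  qed
  moreover have "\<exists>k\<in>B. (FF, subst x (Cst k) g) \<in> ?H" if mem: "(FF, All x g) \<in> ?H" for x g
  proof -
    obtain n where "handled FF (All x g) (cn 0) (set (fst (?ch n))) (snd (?ch n))"
      using chain_union_handled[OF mem] by blast
    then obtain c where "snd (?ch n) (FF, All x g) = Some c" unfolding handled_def by auto
    then show ?thesis using chain_union_witness by blast
  qed
  ultimately show ?thesis unfolding hintikka_def using chain_union_reuse_All by blast
qed

end

lemma hintikka_extension:
  assumes "\<not> closable C (set lst) (\<lambda>_. None)" and "countable B"
    and "\<forall>b\<in>B. tconst C b" and "range Inr \<subseteq> B"
  shows "\<exists>H. set lst \<subseteq> H \<and> \<not> branch_closed H \<and> hintikka H B"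
proof -
  have "B \<noteq> {}" using assms(4) by blast
  then have cn: "range (from_nat_into B) = B" using assms(2) by simp
  have st0: "open_state C B (lst, \<lambda>_. None)" using assms(1) unfolding open_state_def by simp
  let ?H = "chain_union C B (from_nat_into B) (lst, \<lambda>_. None)"
  have "set lst \<subseteq> ?H" unfolding chain_union_def by (metis UN_upper UNIV_I fst_conv state_chain.simps(1))
  then show ?thesis using chain_union_unclosed[OF st0 cn assms(3,4)] chain_union_hintikka[OF st0 cn assms(3,4)]
    by blast
qed

section \<open>The countermodel\<close>

lemma foldr_Imp_undesignated:
  assumes "\<And>f g. val (Imp f g) \<in> impT (val f) (val g)" and "val (foldr Imp hs \<psi>) \<notin> designated"
  shows "(\<forall>\<gamma>\<in>set hs. val \<gamma> \<in> designated) \<and> val \<psi> \<notin> designated"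
  using assms(2)
proof (induction hs)
  case (Cons \<gamma> hs)
  have "val (Imp \<gamma> (foldr Imp hs \<psi>)) \<in> impT (val \<gamma>) (val (foldr Imp hs \<psi>))" by (rule assms(1))
  then have "val \<gamma> \<in> designated \<and> val (foldr Imp hs \<psi>) \<notin> designated"
    using Cons.prems unfolding designated_def
    by (cases "val \<gamma>"; cases "val (foldr Imp hs \<psi>)") auto
  then show ?case using Cons.IH by simp
qed simp

lemma is_valuation_canon_val:
  fixes \<rho> :: "'u \<Rightarrow> 'c + nat"
  assumes B: "B \<noteq> {}" and onto: "(\<rho> \<circ> interpU CI) ` constsU C U CI = B"
  shows "is_valuation ar C U (\<lambda>p us. canon_val H B e (Atom p (map (Cst \<circ> \<rho>) us))) CI
    (\<lambda>\<psi>. canon_val H B e (map_consts (\<rho> \<circ> interpU CI) \<psi>))"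
  unfolding is_valuation_def Let_def
proof (intro conjI allI impI)
  let ?h = "\<rho> \<circ> interpU CI" and ?K = "constsU C U CI"
  fix p ts assume "sentence ar ?K (Atom p ts)"
  then have "fv (Atom p ts) = {}" unfolding sentence_def by blast
  then have "map_tm ?h t = (Cst \<circ> \<rho>) (eval_tm CI t)" if "t \<in> set ts" for t
    using that by (cases t) auto
  then have "map (map_tm ?h) ts = map (Cst \<circ> \<rho>) (map (eval_tm CI) ts)"
    by (simp add: map_eq_conv)
  then show "canon_val H B e (map_consts ?h (Atom p ts)) =
      canon_val H B e (Atom p (map (Cst \<circ> \<rho>) (map (eval_tm CI) ts)))"
    by (simp only: map_consts.simps)
next
  let ?h = "\<rho> \<circ> interpU CI" and ?K = "constsU C U CI"
  fix x f
  have "{canon_val H B e (map_consts ?h (subst x (Cst k) f)) | k. k \<in> ?K} =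
      (\<lambda>k. canon_val H B e (subst x (Cst k) (map_consts ?h f))) ` (?h ` ?K)"
    by (auto simp: map_consts_subst_Cst)
  also have "\<dots> = (\<lambda>k. canon_val H B (e(x := k)) (map_consts ?h f)) ` B"
    using onto by (simp add: canon_val_subst)
  finally show "canon_val H B e (map_consts ?h (All x f)) \<in>
      forallT {canon_val H B e (map_consts ?h (subst x (Cst k) f)) | k. k \<in> ?K}"
    using canon_val_legal(4)[OF B] by simp
next
  fix f g assume "sentence ar (constsU C U CI) f \<and> sentence ar (constsU C U CI) g \<and> variant f g"
  then show "canon_val H B e (map_consts (\<rho> \<circ> interpU CI) f) =
      canon_val H B e (map_consts (\<rho> \<circ> interpU CI) g)"
    using canon_val_variant variant_map_consts B by blast
qed (simp_all only: map_consts.simps canon_val_legal)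

text \<open>The universe consists of the constants of \<open>C\<close> and all new constants; for the
  valuation, constants of \<open>C\<close> that do not occur in \<open>C0\<close> are identified with \<open>Inr 0\<close>, since
  only countably many constants can be enumerated by the construction of \<open>H\<close>.\<close>
lemma canonical_countermodel:
  fixes H :: "('p, 'c) sfm set"
  assumes "B = Inl ` C0 \<union> range Inr" and "C0 \<subseteq> C"
  shows "\<exists>U PI v. is_structure C (U :: ('c + nat) set) Inl \<and> is_valuation ar C U PI Inl v \<and>
    (\<forall>\<gamma> :: ('p, 'c) fm. const_set \<gamma> \<subseteq> C0 \<longrightarrow>
      v (map_consts Inl \<gamma>) = canon_val H B e (map_consts Inl \<gamma>))"
proof -
  define U :: "('c + nat) set" where "U = Inl ` C \<union> range Inr"
  define \<rho> :: "'c + nat \<Rightarrow> 'c + nat" where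
    "\<rho> u = (case u of Inl c \<Rightarrow> if c \<in> C0 then Inl c else Inr 0 | Inr n \<Rightarrow> Inr n)" for u
  have K: "constsU C U Inl = Inl ` C \<union> Inr ` range Inr"
    unfolding constsU_def U_def by auto
  have "(\<rho> \<circ> interpU Inl) ` constsU C U Inl = B"
  proof
    show "(\<rho> \<circ> interpU Inl) ` constsU C U Inl \<subseteq> B" unfolding K assms(1) \<rho>_def by auto
    show "B \<subseteq> (\<rho> \<circ> interpU Inl) ` constsU C U Inl"
    proof
      fix b assume "b \<in> B"
      then consider c where "c \<in> C0" "b = Inl c" | n where "b = Inr n" unfolding assms(1) by blast
      then show "b \<in> (\<rho> \<circ> interpU Inl) ` constsU C U Inl"
      proof cases
        case 1
        then show ?thesis unfolding K using assms(2) by (auto simp: \<rho>_def intro!: rev_image_eqI[of "Inl c"])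
      next
        case 2
        then show ?thesis unfolding K by (auto simp: \<rho>_def intro!: rev_image_eqI[of "Inr (Inr n)"])
      qed
    qed
  qed
  moreover have "B \<noteq> {}" using assms(1) by blast
  moreover have "map_consts (\<rho> \<circ> interpU Inl) (map_consts Inl \<gamma>) = map_consts Inl \<gamma>"
    if "const_set \<gamma> \<subseteq> C0" for \<gamma>
    using that unfolding map_consts_comp by (intro map_consts_cong_const_set) (auto simp: \<rho>_def)
  moreover have "is_structure C U Inl" unfolding is_structure_def U_def by auto
  ultimately show ?thesis using is_valuation_canon_val by metis
qed

lemma not_tm_conseq:
  fixes U :: "('c + nat) set" and gs :: "('p, 'c) fm list"
  assumes "is_structure C U CI" and "is_valuation ar C U PI CI v"
    and "\<forall>\<gamma>\<in>set gs. fv \<gamma> = {}" and "fv \<phi> = {}"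
    and "\<forall>\<gamma>\<in>set gs. v (map_consts Inl \<gamma>) \<in> designated" and "v (map_consts Inl \<phi>) \<notin> designated"
  shows "\<not> tm_conseq ar C (set gs) \<phi>"
proof -
  let ?K = "constsU C U CI"
  have "?K \<noteq> {}"
    using assms(1) unfolding is_structure_def constsU_def by (cases "C = {}") auto
  then obtain k where k: "k \<in> ?K" by blast
  have closed: "inst s (map_consts Inl \<psi>) = (map_consts Inl \<psi> :: ('p, 'c + ('c + nat)) fm)"
    if "fv \<psi> = {}" for s \<psi>
    using that by (simp add: inst_closed fv_map_consts)
  have "\<forall>\<gamma>\<in>set gs. \<forall>s. (\<forall>x. s x \<in> ?K) \<longrightarrow> v (inst (Cst \<circ> s) (map_fm id Inl \<gamma>)) \<in> designated"
  proof (intro ballI allI impI)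
    fix \<gamma> s assume "\<gamma> \<in> set gs"
    then show "v (inst (Cst \<circ> s) (map_fm id Inl \<gamma>)) \<in> designated"
      unfolding map_fm_id using assms(3,5) closed by simp
  qed
  moreover have "\<not> (\<forall>s. (\<forall>x. s x \<in> ?K) \<longrightarrow> v (inst (Cst \<circ> s) (map_fm id Inl \<phi>)) \<in> designated)"
  proof
    assume "\<forall>s. (\<forall>x. s x \<in> ?K) \<longrightarrow> v (inst (Cst \<circ> s) (map_fm id Inl \<phi>)) \<in> designated"
    from this[rule_format, of "\<lambda>_. k"]
    have "v (inst (Cst \<circ> (\<lambda>_. k)) (map_fm id Inl \<phi>)) \<in> designated" using k by simp
    then show False unfolding map_fm_id using assms(4,6) closed by simp
  qed
  ultimately show ?thesis using assms(1,2) unfolding tm_conseq_def sem_conseq_in_def by blast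
qed

lemma sentence_foldr_Imp:
  "\<forall>\<gamma>\<in>set gs. sentence ar C \<gamma> \<Longrightarrow> sentence ar C \<phi> \<Longrightarrow>
    fv (foldr Imp gs \<phi>) = {} \<and> const_set (foldr Imp gs \<phi>) \<subseteq> C"
  unfolding sentence_def wff_def fv_foldr_Imp const_set_foldr_Imp by auto

lemma hintikka_refutes_tm_conseq:
  fixes gs :: "('p, 'c) fm list" and H :: "('p, 'c) sfm set"
  assumes "\<forall>\<gamma>\<in>set gs. sentence ar C \<gamma>" and "sentence ar C \<phi>"
    and B: "B = Inl ` const_set (foldr Imp gs \<phi>) \<union> range Inr"
    and L: "L \<in> {FF, Ff}" and H: "(L, map_consts Inl (foldr Imp gs \<phi>)) \<in> H"
    and "\<not> branch_closed H" and "hintikka H B"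
  shows "\<not> tm_conseq ar C (set gs) \<phi>"
proof -
  let ?\<chi> = "foldr Imp gs \<phi>" and ?val = "canon_val H B (\<lambda>_. Inr 0)"
  have \<chi>: "fv ?\<chi> = {}" "const_set ?\<chi> \<subseteq> C" using sentence_foldr_Imp[OF assms(1,2)] by auto
  have "?val (map_consts Inl ?\<chi>) = L"
    using canon_val_label[OF assms(6,7)] H \<chi>(1) by (simp add: B inst_closed fv_map_consts)
  then have "?val (foldr Imp (map (map_consts Inl) gs) (map_consts Inl \<phi>)) \<notin> designated"
    using L by (auto simp: map_consts_foldr_Imp designated_def)
  from foldr_Imp_undesignated[OF canon_val_legal(3) this]
  have val: "\<forall>\<gamma>\<in>set gs. ?val (map_consts Inl \<gamma>) \<in> designated" "?val (map_consts Inl \<phi>) \<notin> designated"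
    by simp_all
  obtain U PI v where U: "is_structure C (U :: ('c + nat) set) Inl" "is_valuation ar C U PI Inl v"
    and agree: "\<forall>\<gamma> :: ('p, 'c) fm. const_set \<gamma> \<subseteq> const_set ?\<chi> \<longrightarrow>
      v (map_consts Inl \<gamma>) = ?val (map_consts Inl \<gamma>)"
    using canonical_countermodel[OF B \<chi>(2)] by blast
  have "\<forall>\<gamma>\<in>set gs. v (map_consts Inl \<gamma>) \<in> designated" "v (map_consts Inl \<phi>) \<notin> designated"
    using val agree by (auto simp: const_set_foldr_Imp)
  then show ?thesis using not_tm_conseq[OF U] \<chi>(1) by (simp add: fv_foldr_Imp)
qed

theorem mainTheorem4:
  fixes ar :: "'p \<Rightarrow> nat" and C :: "'c set"
    and gs :: "('p, 'c) fm list" and \<phi> :: "('p, 'c) fm"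
  assumes "\<forall>p. 1 \<le> ar p"
    and "distinct gs"
    and "\<forall>\<gamma>\<in>set gs. sentence ar C \<gamma>"
    and "sentence ar C \<phi>"
    and "tm_conseq ar C (set gs) \<phi>"
  shows "tab_conseq C gs \<phi>"
proof -
  let ?\<chi> = "foldr Imp gs \<phi>"
  define B :: "('c + nat) set" where "B = Inl ` const_set ?\<chi> \<union> range Inr"
  have B: "countable B" "\<forall>b\<in>B. tconst C b" "range Inr \<subseteq> B"
    using sentence_foldr_Imp[OF assms(3,4)] unfolding B_def
    by (auto intro!: countable_Un countable_image simp: countable_finite finite_const_set)
  have "closable C {(L, map_fm id Inl ?\<chi>)} (\<lambda>_. None)" if L: "L \<in> {FF, Ff}" for L
  proof (rule ccontr)
    assume "\<not> closable C {(L, map_fm id Inl ?\<chi>)} (\<lambda>_. None)"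
    then obtain H where "(L, map_consts Inl ?\<chi>) \<in> H" "\<not> branch_closed H" "hintikka H B"
      using hintikka_extension[OF _ B, of "[(L, map_consts Inl ?\<chi>)]"] by (auto simp: map_fm_id)
    then show False using hintikka_refutes_tm_conseq[OF assms(3,4) B_def L] assms(5) by blast
  qed
  then show ?thesis unfolding tab_conseq_def tab_provable_def by blast
qed

end
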